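(* Let $q$ be a prime power and let $C\subseteq \mathrm{GF}(q^m)^n$ be a (linear or nonlinear) code with $n\le m$, $|C|=q^{mk}$ for an integer $1\le k\le n$, and minimum rank distance $d_{\mathrm R}=n-k+1$. Let $r=n-k$ and $t=\lfloor (d_{\mathrm R}-1)/2\rfloor$. Then for every transmitted codeword $\mathbf c\in C$ and every integer $u$ with $d_{\mathrm R}-t\le u\le n$, the decoder error probability of the bounded rank distance decoder satisfies $$P_E(t;u)<\frac{q^{-t^2}}{K_q^{2}},\qquad\text{where } K_q=\prod_{j=1}^{\infty}(1-q^{-j}).$$
   Context: For $\mathbf x=(x_0,\dots,x_{n-1})\in\mathrm{GF}(q^m)^n$, the rank $\mathrm{rk}(\mathbf x)$ is the dimension over $\mathrm{GF}(q)$ of the $\mathrm{GF}(q)$-span of $x_0,\dots,x_{n-1}$ (equivalently, the rank of the $m\times n$ matrix over $\mathrm{GF}(q)$ obtained by expanding each coordinate in a fixed basis of $\mathrm{GF}(q^m)$ over $\mathrm{GF}(q)$). The rank distance is $d(\mathbf x,\mathbf y)=\mathrm{rk}(\mathbf x-\mathbf y)$, and the minimum rank distance of $C$ is the minimum of $\mathrm{rk}(\mathbf c-\mathbf d)$ over distinct $\mathbf c,\mathbf d\in C$. A codeword $\mathbf c$ is transmitted and $\mathbf y=\mathbf c+\mathbf e$ is received. The bounded rank distance decoder outputs the codeword $\mathbf c'\in C$ with $\mathrm{rk}(\mathbf y-\mathbf c')\le t$ if one exists (it is then unique), and declares a decoder failure otherwise. A decoder error occurs when it outputs a codeword $\mathbf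 c'\neq\mathbf c$. For $0\le u\le n$, $P_E(t;u)$ is the probability of decoder error when the error $\mathbf e$ is uniformly distributed over the set of vectors of $\mathrm{GF}(q^m)^n$ of rank exactly $u$. *)

theory Defs
  imports "HOL-Analysis.Analysis" "HOL-Number_Theory.Prime_Powers"
begin

text \<open>Vectors of length n over a field: functions nat => 'a vanishing outside {..<n}.
  Addition and subtraction are pointwise.\<close>
definition vecs :: "nat \<Rightarrow> (nat \<Rightarrow> 'a::zero) set" where
  "vecs n = {x. \<forall>i\<ge>n. x i = 0}"

definition is_subfield :: "'a::field set \<Rightarrow> bool" where
  "is_subfield F \<longleftrightarrow> 0 \<in> F \<and> 1 \<in> F \<and> (\<forall>a\<in>F. \<forall>b\<in>F. a + b \<in> F \<and> a * b \<in> F)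
     \<and> (\<forall>a\<in>F. - a \<in> F) \<and> (\<forall>a\<in>F. a \<noteq> 0 \<longrightarrow> inverse a \<in> F)"

definition lin_indep_over :: "'a::field set \<Rightarrow> (nat \<Rightarrow> 'a) \<Rightarrow> nat set \<Rightarrow> bool" where
  "lin_indep_over F x S \<longleftrightarrow>
     (\<forall>c. (\<forall>i\<in>S. c i \<in> F) \<and> (\<Sum>i\<in>S. c i * x i) = 0 \<longrightarrow> (\<forall>i\<in>S. c i = 0))"

text \<open>Rank over F of (x_0,...,x_{n-1}): dimension of the F-span of the coordinates,
  i.e. the maximal number of F-linearly independent coordinates.\<close>
definition rk :: "'a::field set \<Rightarrow> nat \<Rightarrow> (nat \<Rightarrow> 'a) \<Rightarrow> nat" where
  "rk F n x = Max {card S | S. S \<subseteq> {..<n} \<and> lin_indep_over F x S}"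

definition min_rank_dist :: "'a::field set \<Rightarrow> nat \<Rightarrow> (nat \<Rightarrow> 'a) set \<Rightarrow> nat" where
  "min_rank_dist F n C = Min {rk F n (\<lambda>i. c i - d i) | c d. c \<in> C \<and> d \<in> C \<and> c \<noteq> d}"

text \<open>Decoder error for transmitted c and error e: the bounded rank distance decoder
  (radius t) outputs a codeword c' different from c, i.e. some c' \<noteq> c lies within
  rank distance t of the received word c + e.\<close>
definition decoder_error :: "'a::field set \<Rightarrow> nat \<Rightarrow> (nat \<Rightarrow> 'a) set \<Rightarrow> nat \<Rightarrow> (nat \<Rightarrow> 'a) \<Rightarrow> (nat \<Rightarrow> 'a) \<Rightarrow> bool" where
  "decoder_error F n C t c e \<longleftrightarrow> (\<exists>c'\<in>C. c' \<noteq> c \<and> rk F n (\<lambda>i. (c i + e i) - c' i) \<le> t)"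

text \<open>P_E(t;u): probability of decoder error, error uniform over vectors of rank exactly u.\<close>
definition PE :: "'a::field set \<Rightarrow> nat \<Rightarrow> (nat \<Rightarrow> 'a) set \<Rightarrow> (nat \<Rightarrow> 'a) \<Rightarrow> nat \<Rightarrow> nat \<Rightarrow> real" where
  "PE F n C c t u =
     real (card {e \<in> vecs n. rk F n e = u \<and> decoder_error F n C t c e})
     / real (card {e \<in> vecs n. rk F n e = u})"

definition Kq :: "nat \<Rightarrow> real" where
  "Kq q = (\<Prod>j. 1 - 1 / real q ^ Suc j)"

end

(*
  Let Q = q^m. The F-linear relations among the coordinates of a vector x form a subspace
  relations x of F^n of dimension n - rk x. After translating the code by -c, a decoder
  error for an error e of rank u means rk (e - x) <= t for some nonzero codeword x.
  Double count the quadruples (x, e, A, B) in which A is an ordered basis of an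
  (n - t)-dimensional subspace of relations (e - x) and B one of an (n - u)-dimensional
  subspace of relations e. For fixed A and B every admissible x has span A \<inter> span B
  among its relations, and e is determined by x up to the annihilator of span A + span B;
  as distinct codewords are at rank distance > n - k, at most Q^(k + t + u - n) pairs (x, e)
  remain. Counting all vectors of rank u in the same way gives P_E <= N / D with
    N = prod_{i<n-t} (q^n - q^i) * Q^(k+t+u-n),
    D = prod_{i<n-t} (q^(n-t) - q^i) * prod_{i<u} (Q - q^i).
  Since prod_{i<u} (q^L - q^i) > q^(L u) K_q whenever u <= L, comparing exponents yields
  N / D < q^(-t^2) / K_q^2.
*)
theory Submission
  imports Defs "HOL-Library.Function_Algebras"
begin

lemma bij_betw_restrict_funs:
  "bij_betw (\<lambda>w. restrict w I) {w. (\<forall>j\<in>I. w j \<in> A) \<and> (\<forall>j. j \<notin> I \<longrightarrow> w j = w0 j)}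
     (PiE I (\<lambda>_. A))"
  by (rule bij_betwI[where g = "\<lambda>f j. if j \<in> I then f j else w0 j"])
    (auto simp: PiE_def extensional_def restrict_def)

lemma card_funs_fixed_outside:
  assumes "finite I"
  shows "card {w. (\<forall>j\<in>I. w j \<in> A) \<and> (\<forall>j. j \<notin> I \<longrightarrow> w j = w0 j)} = card A ^ card I"
  using bij_betw_same_card[OF bij_betw_restrict_funs[of I A w0]] assms by (simp add: card_PiE)

lemma finite_funs_fixed_outside:
  assumes "finite I" "finite A"
  shows "finite {w. (\<forall>j\<in>I. w j \<in> A) \<and> (\<forall>j. j \<notin> I \<longrightarrow> w j = w0 j)}"
  using bij_betw_finite[OF bij_betw_restrict_funs[of I A w0]] assms by (simp add: finite_PiE)

lemma card_funs_vanishing_outside: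
  assumes "finite I"
  shows "card {w :: nat \<Rightarrow> 'a::{zero,finite}. \<forall>j. j \<notin> I \<longrightarrow> w j = 0} = CARD('a) ^ card I"
  using card_funs_fixed_outside[OF assms, of "UNIV :: 'a set" "\<lambda>_. 0"] by simp

lemma finite_funs_vanishing_outside:
  assumes "finite I"
  shows "finite {w :: nat \<Rightarrow> 'a::{zero,finite}. \<forall>j. j \<notin> I \<longrightarrow> w j = 0}"
  using finite_funs_fixed_outside[OF assms, of "UNIV :: 'a set" "\<lambda>_. 0"] by simp

lemma card_le_if_inj_vanishing_outside:
  fixes f :: "'b \<Rightarrow> nat \<Rightarrow> 'a::{zero,finite}"
  assumes "inj_on f A" "\<And>x j. x \<in> A \<Longrightarrow> j \<notin> I \<Longrightarrow> f x j = 0" "finite I"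
  shows "card A \<le> CARD('a) ^ card I"
proof -
  have "card A \<le> card {w :: nat \<Rightarrow> 'a. \<forall>j. j \<notin> I \<longrightarrow> w j = 0}"
    using assms by (intro card_inj_on_le finite_funs_vanishing_outside) auto
  then show ?thesis using card_funs_vanishing_outside[OF assms(3), where 'a = 'a] by simp
qed

lemma card_eq_card_image_mult:
  assumes "finite A" "\<And>y. y \<in> f ` A \<Longrightarrow> card {a\<in>A. f a = y} = k"
  shows "card A = card (f ` A) * k"
proof -
  have "card A = card (\<Union>y\<in>f ` A. {a\<in>A. f a = y})"
    by (rule arg_cong[where f = card]) auto
  also have "\<dots> = (\<Sum>y\<in>f ` A. card {a\<in>A. f a = y})"
    by (rule card_UN_disjoint) (use assms in auto)
  finally show ?thesis using assms(2) by simp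
qed

lemma sum_fun_apply: "(\<Sum>i\<in>S. (f i :: 'b \<Rightarrow> 'c::comm_monoid_add)) j = (\<Sum>i\<in>S. f i j)"
  by (induct S rule: infinite_finite_induct) auto

lemma divide_le_divide_of_nat:
  assumes "a * d \<le> c * b" "0 < d"
  shows "real a / real b \<le> real c / real d"
proof (cases "b = 0")
  case False
  then show ?thesis using assms by (simp add: divide_simps flip: of_nat_mult)
qed simp

lemma vecs_eq_vanishing_outside: "vecs n = {w. \<forall>j. j \<notin> {..<n} \<longrightarrow> w j = 0}"
  by (auto simp: vecs_def)

lemma finite_vecs [simp]: "finite (vecs n :: (nat \<Rightarrow> 'a::{zero,finite}) set)"
  unfolding vecs_eq_vanishing_outside by (rule finite_funs_vanishing_outside) simp

lemma vecs_diff: "x \<in> vecs n \<Longrightarrow> y \<in> vecs n \<Longrightarrow> x - y \<in> (vecs n :: (nat \<Rightarrow> 'a::ab_group_add) set)"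
  by (auto simp: vecs_def)

lemma is_subfieldD:
  assumes "is_subfield F"
  shows "0 \<in> F" "1 \<in> F" "a \<in> F \<Longrightarrow> b \<in> F \<Longrightarrow> a + b \<in> F" "a \<in> F \<Longrightarrow> b \<in> F \<Longrightarrow> a * b \<in> F"
    "a \<in> F \<Longrightarrow> - a \<in> F" "a \<in> F \<Longrightarrow> inverse a \<in> F" "a \<in> F \<Longrightarrow> b \<in> F \<Longrightarrow> a - b \<in> F"
proof -
  have F: "0 \<in> F" "1 \<in> F" "\<And>a b. a \<in> F \<Longrightarrow> b \<in> F \<Longrightarrow> a + b \<in> F"
    "\<And>a b. a \<in> F \<Longrightarrow> b \<in> F \<Longrightarrow> a * b \<in> F" "\<And>a. a \<in> F \<Longrightarrow> - a \<in> F"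
    "\<And>a. a \<in> F \<Longrightarrow> a \<noteq> 0 \<Longrightarrow> inverse a \<in> F"
    using assms unfolding is_subfield_def by auto
  then show "0 \<in> F" "1 \<in> F" "a \<in> F \<Longrightarrow> b \<in> F \<Longrightarrow> a + b \<in> F"
    "a \<in> F \<Longrightarrow> b \<in> F \<Longrightarrow> a * b \<in> F" "a \<in> F \<Longrightarrow> - a \<in> F"
    by blast+
  show "a \<in> F \<Longrightarrow> inverse a \<in> F" using F(1,6) by (cases "a = 0") auto
  show "a \<in> F \<Longrightarrow> b \<in> F \<Longrightarrow> a - b \<in> F" using F(3,5) by (metis diff_conv_add_uminus)
qed

section \<open>Vector spaces over a finite subfield\<close>

locale subfield_space =
  fixes F :: "'a::field set" and scale :: "'a \<Rightarrow> 'v::ab_group_add \<Rightarrow> 'v"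
  assumes subfield: "is_subfield F" and finite_F: "finite F"
    and scale_left_distrib: "scale (a + b) v = scale a v + scale b v"
    and scale_right_distrib: "scale a (v + w) = scale a v + scale a w"
    and scale_scale: "scale (a * b) v = scale a (scale b v)"
    and scale_one: "scale 1 v = v"
begin

lemmas F_closed = is_subfieldD[OF subfield]

lemma scale_zero_left [simp]: "scale 0 v = 0"
  using scale_left_distrib[of 0 0 v] by simp

lemma scale_zero_right [simp]: "scale a 0 = 0"
  using scale_right_distrib[of a 0 0] by simp

lemma scale_minus_left: "scale (- a) v = - scale a v"
  using scale_left_distrib[of a "- a" v] by (simp add: minus_unique)

lemma scale_minus_right: "scale a (- v) = - scale a v"
  using scale_right_distrib[of a v "- v"] by (simp add: minus_unique)

lemma scale_diff_left: "scale (a - b) v = scale a v - scale b v"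
  unfolding diff_conv_add_uminus by (simp only: scale_left_distrib scale_minus_left)

lemma scale_sum_right: "scale a (\<Sum>i\<in>S. f i) = (\<Sum>i\<in>S. scale a (f i))"
  by (induct S rule: infinite_finite_induct) (simp_all add: scale_right_distrib)

lemma card_F_ge_2: "2 \<le> card F"
proof -
  have "card {0::'a, 1} \<le> card F" using F_closed finite_F by (intro card_mono) auto
  then show ?thesis by simp
qed

lemma power_card_F_less_iff: "card F ^ a < card F ^ b \<longleftrightarrow> a < b"
  using card_F_ge_2 by (simp add: power_strict_increasing_iff)

lemma power_card_F_le_iff: "card F ^ a \<le> card F ^ b \<longleftrightarrow> a \<le> b"
  using card_F_ge_2 by (simp add: power_increasing_iff)

lemma power_card_F_inject: "card F ^ a = card F ^ b \<longleftrightarrow> a = b"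
  using card_F_ge_2 by (simp add: power_inject_exp)

lemma prod_power_diff_pos: "l \<le> N \<Longrightarrow> 0 < (\<Prod>i<l. card F ^ N - card F ^ i)"
  by (intro prod_pos) (simp add: power_card_F_less_iff)

definition lincomb :: "(nat \<Rightarrow> 'v) \<Rightarrow> (nat \<Rightarrow> 'a) \<Rightarrow> nat set \<Rightarrow> 'v" where
  "lincomb g c S = (\<Sum>i\<in>S. scale (c i) (g i))"

definition lspan :: "(nat \<Rightarrow> 'v) \<Rightarrow> nat set \<Rightarrow> 'v set" where
  "lspan g S = {lincomb g c S | c. \<forall>i\<in>S. c i \<in> F}"

definition indep :: "(nat \<Rightarrow> 'v) \<Rightarrow> nat set \<Rightarrow> bool" where
  "indep g S \<longleftrightarrow> (\<forall>c. (\<forall>i\<in>S. c i \<in> F) \<longrightarrow> lincomb g c S = 0 \<longrightarrow> (\<forall>i\<in>S. c i = 0))"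

definition is_subspace :: "'v set \<Rightarrow> bool" where
  "is_subspace U \<longleftrightarrow> 0 \<in> U \<and> (\<forall>x\<in>U. \<forall>y\<in>U. x + y \<in> U) \<and> (\<forall>a\<in>F. \<forall>x\<in>U. scale a x \<in> U)"

definition indep_tuples :: "'v set \<Rightarrow> nat \<Rightarrow> (nat \<Rightarrow> 'v) set" where
  "indep_tuples U l = {g. (\<forall>i<l. g i \<in> U) \<and> (\<forall>i\<ge>l. g i = 0) \<and> indep g {..<l}}"

lemma lincomb_in_lspan: "(\<And>i. i \<in> S \<Longrightarrow> c i \<in> F) \<Longrightarrow> lincomb g c S \<in> lspan g S"
  unfolding lspan_def by blast

lemma indepD: "indep g S \<Longrightarrow> (\<And>i. i \<in> S \<Longrightarrow> c i \<in> F) \<Longrightarrow> lincomb g c S = 0 \<Longrightarrow> i \<in> S \<Longrightarrow> c i = 0"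
  unfolding indep_def by blast

lemma lincomb_add: "lincomb g c S + lincomb g d S = lincomb g (\<lambda>i. c i + d i) S"
  by (simp add: lincomb_def sum.distrib scale_left_distrib)

lemma lincomb_diff: "lincomb g c S - lincomb g d S = lincomb g (\<lambda>i. c i - d i) S"
  by (simp add: lincomb_def sum_subtractf scale_diff_left)

lemma scale_lincomb: "scale a (lincomb g c S) = lincomb g (\<lambda>i. a * c i) S"
  by (simp add: lincomb_def scale_sum_right scale_scale)

lemma lincomb_cong:
  "(\<And>i. i \<in> S \<Longrightarrow> c i = d i) \<Longrightarrow> (\<And>i. i \<in> S \<Longrightarrow> g i = h i) \<Longrightarrow> lincomb g c S = lincomb h d S"
  unfolding lincomb_def by (rule sum.cong) auto

lemma lincomb_zero: "(\<And>i. i \<in> S \<Longrightarrow> c i = 0) \<Longrightarrow> lincomb g c S = 0"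
  unfolding lincomb_def by (rule sum.neutral) auto

lemma lincomb_insert:
  "finite S \<Longrightarrow> j \<notin> S \<Longrightarrow> lincomb g c (insert j S) = scale (c j) (g j) + lincomb g c S"
  by (simp add: lincomb_def)

lemma lincomb_mono_neutral:
  "finite T \<Longrightarrow> S \<subseteq> T \<Longrightarrow> (\<And>i. i \<in> T - S \<Longrightarrow> c i = 0) \<Longrightarrow> lincomb g c T = lincomb g c S"
  unfolding lincomb_def by (rule sum.mono_neutral_right) auto

lemma lspan_cong: "(\<And>i. i \<in> S \<Longrightarrow> g i = h i) \<Longrightarrow> lspan g S = lspan h S"
  unfolding lspan_def using lincomb_cong[of S _ _ g h] by metis

lemma indep_cong: "(\<And>i. i \<in> S \<Longrightarrow> g i = h i) \<Longrightarrow> indep g S = indep h S"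
  unfolding indep_def using lincomb_cong[of S _ _ g h] by metis

lemma subspace_diff: "is_subspace U \<Longrightarrow> x \<in> U \<Longrightarrow> y \<in> U \<Longrightarrow> x - y \<in> U"
  unfolding is_subspace_def using F_closed(2,5) scale_minus_left[of 1 y]
  by (metis diff_conv_add_uminus scale_one)

lemma subspace_lincomb:
  assumes "is_subspace U" "\<And>i. i \<in> S \<Longrightarrow> c i \<in> F" "\<And>i. i \<in> S \<Longrightarrow> g i \<in> U"
  shows "lincomb g c S \<in> U"
  unfolding lincomb_def using assms
  by (induct S rule: infinite_finite_induct) (auto simp: is_subspace_def)

lemma subspace_lspan: "is_subspace (lspan g S)"
  unfolding is_subspace_def
proof (intro conjI ballI)
  show "0 \<in> lspan g S" using lincomb_in_lspan[of S "\<lambda>_. 0" g] lincomb_zero F_closed(1) by force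
  fix x y assume "x \<in> lspan g S" "y \<in> lspan g S"
  then obtain c d where "x = lincomb g c S" "\<forall>i\<in>S. c i \<in> F" "y = lincomb g d S" "\<forall>i\<in>S. d i \<in> F"
    unfolding lspan_def by blast
  then show "x + y \<in> lspan g S" unfolding lspan_def using lincomb_add F_closed(3) by fastforce
next
  fix a x assume "a \<in> F" "x \<in> lspan g S"
  then obtain c where "x = lincomb g c S" "\<forall>i\<in>S. c i \<in> F" unfolding lspan_def by blast
  then show "scale a x \<in> lspan g S"
    unfolding lspan_def using scale_lincomb \<open>a \<in> F\<close> F_closed(4) by fastforce
qed

lemma lspan_subset: "is_subspace U \<Longrightarrow> (\<And>i. i \<in> S \<Longrightarrow> g i \<in> U) \<Longrightarrow> lspan g S \<subseteq> U"
  unfolding lspan_def using subspace_lincomb by blast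

lemma in_lspan:
  assumes "finite S" "i \<in> S"
  shows "g i \<in> lspan g S"
proof -
  have "lincomb g (\<lambda>j. if j = i then 1 else 0) S = (\<Sum>j\<in>S. if j = i then g j else 0)"
    unfolding lincomb_def by (rule sum.cong) (auto simp: scale_one)
  also have "\<dots> = g i" using assms by simp
  finally show ?thesis using lincomb_in_lspan[of S "\<lambda>j. if j = i then 1 else 0" g] F_closed by auto
qed

lemma card_lspan:
  assumes S: "finite S" and ind: "indep g S"
  shows "card (lspan g S) = card F ^ card S"
proof -
  let ?D = "{c. (\<forall>j\<in>S. c j \<in> F) \<and> (\<forall>j. j \<notin> S \<longrightarrow> c j = (\<lambda>_. 0) j)}"
  have "bij_betw (\<lambda>c. lincomb g c S) ?D (lspan g S)"
    unfolding bij_betw_def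
  proof
    show "inj_on (\<lambda>c. lincomb g c S) ?D"
    proof (rule inj_onI)
      fix c d assume c: "c \<in> ?D" and d: "d \<in> ?D" and eq: "lincomb g c S = lincomb g d S"
      then have "lincomb g (\<lambda>i. c i - d i) S = 0" using lincomb_diff[of g c S d] by simp
      then have "\<forall>i\<in>S. c i - d i = 0" using indepD[OF ind, of "\<lambda>i. c i - d i"] c d F_closed(7)
        by blast
      then show "c = d" using c d by (auto intro!: ext)
    qed
    show "(\<lambda>c. lincomb g c S) ` ?D = lspan g S"
    proof
      show "lspan g S \<subseteq> (\<lambda>c. lincomb g c S) ` ?D"
      proof
        fix x assume "x \<in> lspan g S"
        then obtain c where c: "x = lincomb g c S" "\<forall>i\<in>S. c i \<in> F" unfolding lspan_def by blast
        then have "x = lincomb g (\<lambda>j. if j \<in> S then c j else 0) S" by (auto intro: lincomb_cong)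
        moreover have "(\<lambda>j. if j \<in> S then c j else 0) \<in> ?D" using c by auto
        ultimately show "x \<in> (\<lambda>c. lincomb g c S) ` ?D" by blast
      qed
    qed (auto simp: lspan_def)
  qed
  then have "card (lspan g S) = card ?D" by (simp add: bij_betw_same_card)
  also have "\<dots> = card F ^ card S" using S by (rule card_funs_fixed_outside)
  finally show ?thesis .
qed

lemma indep_insert:
  assumes S: "finite S" and ind: "indep g S" and j: "j \<notin> S" and nsp: "g j \<notin> lspan g S"
  shows "indep g (insert j S)"
  unfolding indep_def
proof (intro allI impI)
  fix c assume cF: "\<forall>i\<in>insert j S. c i \<in> F" and z: "lincomb g c (insert j S) = 0"
  then have z': "scale (c j) (g j) + lincomb g c S = 0" using lincomb_insert[OF S j] by simp
  have cj: "c j = 0"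
  proof (rule ccontr)
    assume cj: "c j \<noteq> 0"
    have "lincomb g c S = - scale (c j) (g j)" using z' by (metis minus_unique)
    then have "scale (- inverse (c j)) (lincomb g c S) = scale (inverse (c j) * c j) (g j)"
      by (simp add: scale_minus_left scale_minus_right scale_scale)
    then have "g j = scale (- inverse (c j)) (lincomb g c S)" using cj by (simp add: scale_one)
    also have "\<dots> = lincomb g (\<lambda>i. - inverse (c j) * c i) S" by (rule scale_lincomb)
    finally have "g j \<in> lspan g S"
      using cF F_closed(4-6) by (simp add: lincomb_in_lspan)
    then show False using nsp by blast
  qed
  then have "\<forall>i\<in>S. c i = 0" using z' ind cF unfolding indep_def by simp
  then show "\<forall>i\<in>insert j S. c i = 0" using cj by blast
qed

lemma indep_subset:
  assumes T: "finite T" and ind: "indep g T" and sub: "S \<subseteq> T"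
  shows "indep g S"
  unfolding indep_def
proof (intro allI impI)
  fix c assume cF: "\<forall>i\<in>S. c i \<in> F" and z: "lincomb g c S = 0"
  let ?c = "\<lambda>i. if i \<in> S then c i else 0"
  have "lincomb g ?c T = lincomb g ?c S" by (rule lincomb_mono_neutral[OF T sub]) auto
  also have "\<dots> = lincomb g c S" by (rule lincomb_cong) auto
  finally have "lincomb g ?c T = 0" using z by simp
  moreover have "\<And>i. i \<in> T \<Longrightarrow> ?c i \<in> F" using cF F_closed(1) by simp
  ultimately have "\<And>i. i \<in> T \<Longrightarrow> ?c i = 0" using indepD[OF ind, of ?c] by blast
  then show "\<forall>i\<in>S. c i = 0" using sub by (metis subsetD)
qed

lemma indep_last_notin_lspan:
  assumes ind: "indep g {..<Suc l}"
  shows "g l \<notin> lspan g {..<l}"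
proof
  assume "g l \<in> lspan g {..<l}"
  then obtain c where c: "g l = lincomb g c {..<l}" "\<forall>i<l. c i \<in> F" unfolding lspan_def by blast
  define c' where "c' = (\<lambda>i. if i = l then -1 else c i)"
  have "lincomb g c' {..<Suc l} = scale (c' l) (g l) + lincomb g c' {..<l}"
    using lincomb_insert[of "{..<l}" l g c'] by (simp add: lessThan_Suc)
  also have "lincomb g c' {..<l} = lincomb g c {..<l}" by (rule lincomb_cong) (auto simp: c'_def)
  finally have "lincomb g c' {..<Suc l} = 0" using c
    by (simp add: scale_minus_left scale_one c'_def)
  moreover have "\<And>i. i < Suc l \<Longrightarrow> c' i \<in> F" using c F_closed(2,5) by (simp add: c'_def)
  ultimately have "c' l = 0" using indepD[OF ind, of c'] by blast
  then show False by (simp add: c'_def)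
qed

lemma indep_tuples_extend:
  assumes g: "g \<in> indep_tuples U l" and v: "v \<in> U" "v \<notin> lspan g {..<l}"
  shows "g(l := v) \<in> indep_tuples U (Suc l)"
proof -
  have "indep (g(l := v)) {..<l}" using g
    by (subst indep_cong[of _ _ g]) (auto simp: indep_tuples_def)
  moreover have "lspan (g(l := v)) {..<l} = lspan g {..<l}" by (rule lspan_cong) auto
  ultimately have "indep (g(l := v)) (insert l {..<l})"
    using v by (intro indep_insert) auto
  then show ?thesis using g v by (auto simp: indep_tuples_def lessThan_Suc)
qed

lemma indep_tuples_restrict:
  assumes h: "h \<in> indep_tuples U (Suc l)"
  shows "h(l := 0) \<in> indep_tuples U l" "h l \<in> U" "h l \<notin> lspan (h(l := 0)) {..<l}"
proof -
  have ind: "indep h {..<Suc l}" using h by (simp add: indep_tuples_def)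
  then have "indep h {..<l}" by (rule indep_subset[rotated]) auto
  then have "indep (h(l := 0)) {..<l}" by (subst indep_cong[of _ _ h]) auto
  then show "h(l := 0) \<in> indep_tuples U l" using h by (auto simp: indep_tuples_def)
  show "h l \<in> U" using h by (auto simp: indep_tuples_def)
  have "lspan (h(l := 0)) {..<l} = lspan h {..<l}" by (rule lspan_cong) auto
  then show "h l \<notin> lspan (h(l := 0)) {..<l}" using indep_last_notin_lspan[OF ind] by simp
qed

lemma finite_indep_tuples: "finite U \<Longrightarrow> finite (indep_tuples U l)"
  using finite_funs_fixed_outside[of "{..<l}" U "\<lambda>_. 0"]
  by (rule finite_subset[rotated]) (auto simp: indep_tuples_def)

lemma indep_tuples_mono: "U \<subseteq> U' \<Longrightarrow> indep_tuples U l \<subseteq> indep_tuples U' l"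
  by (auto simp: indep_tuples_def)

lemma lspan_indep_tuple_subset: "is_subspace U \<Longrightarrow> g \<in> indep_tuples U l \<Longrightarrow> lspan g {..<l} \<subseteq> U"
  by (rule lspan_subset) (auto simp: indep_tuples_def)

lemma card_lspan_indep_tuple: "g \<in> indep_tuples U l \<Longrightarrow> card (lspan g {..<l}) = card F ^ l"
  by (simp add: card_lspan indep_tuples_def)

lemma card_indep_tuples:
  assumes U: "is_subspace U" "finite U"
  shows "card (indep_tuples U l) = (\<Prod>i<l. card U - card F ^ i)"
proof (induct l)
  case 0
  have "indep_tuples U 0 = {\<lambda>_. 0}" by (auto simp: indep_tuples_def indep_def)
  then show ?case by simp
next
  case (Suc l)
  let ?S = "SIGMA g:indep_tuples U l. U - lspan g {..<l}"
  have "bij_betw (\<lambda>(g, v). g(l := v)) ?S (indep_tuples U (Suc l))"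
  proof (rule bij_betw_byWitness[where f' = "\<lambda>h. (h(l := 0), h l)"])
    show "\<forall>p\<in>?S. (\<lambda>h. (h(l := 0), h l)) ((\<lambda>(g, v). g(l := v)) p) = p"
      by (auto simp: indep_tuples_def fun_eq_iff)
    show "(\<lambda>(g, v). g(l := v)) ` ?S \<subseteq> indep_tuples U (Suc l)"
      using indep_tuples_extend by auto
    show "(\<lambda>h. (h(l := 0), h l)) ` indep_tuples U (Suc l) \<subseteq> ?S"
      using indep_tuples_restrict by auto
  qed auto
  then have "card (indep_tuples U (Suc l)) = card ?S" by (simp add: bij_betw_same_card)
  also have "\<dots> = (\<Sum>g\<in>indep_tuples U l. card (U - lspan g {..<l}))"
    using U by (intro card_SigmaI) (auto intro: finite_indep_tuples)
  also have "\<dots> = (\<Sum>g\<in>indep_tuples U l. card U - card F ^ l)"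
  proof (rule sum.cong)
    fix g assume g: "g \<in> indep_tuples U l"
    then have "lspan g {..<l} \<subseteq> U" using U(1) by (rule lspan_indep_tuple_subset[rotated])
    then show "card (U - lspan g {..<l}) = card U - card F ^ l"
      using U(2) card_lspan_indep_tuple[OF g] by (simp add: card_Diff_subset finite_subset)
  qed simp
  finally show ?case using Suc by simp
qed

lemma exists_basis:
  assumes U: "is_subspace U" "finite U"
  obtains l g where "g \<in> indep_tuples U l" "lspan g {..<l} = U" "card U = card F ^ l"
proof -
  let ?L = "{l. indep_tuples U l \<noteq> {}}"
  have "(\<lambda>_. 0) \<in> indep_tuples U 0" by (auto simp: indep_tuples_def indep_def)
  then have L0: "0 \<in> ?L" by blast
  have bound: "l < card U" if l: "l \<in> ?L" for l
  proof -
    obtain g where g: "g \<in> indep_tuples U l" using l by blast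
    have "card F ^ l \<le> card U"
      using card_lspan_indep_tuple[OF g] lspan_indep_tuple_subset[OF U(1) g] U(2)
      by (metis card_mono)
    moreover have "l < 2 ^ l" by simp
    moreover have "2 ^ l \<le> card F ^ l" using card_F_ge_2 by (simp add: power_mono)
    ultimately show ?thesis by linarith
  qed
  have finL: "finite ?L" using bound by (meson bounded_nat_set_is_finite)
  define l where "l = Max ?L"
  have lL: "l \<in> ?L" unfolding l_def using finL L0 by (intro Max_in) auto
  obtain g where g: "g \<in> indep_tuples U l" using lL by auto
  have "lspan g {..<l} = U"
  proof (rule ccontr)
    assume "lspan g {..<l} \<noteq> U"
    then obtain v where "v \<in> U" "v \<notin> lspan g {..<l}" using lspan_indep_tuple_subset[OF U(1) g]
      by blast
    then have "g(l := v) \<in> indep_tuples U (Suc l)" using g by (intro indep_tuples_extend)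
    then have "Suc l \<le> l" unfolding l_def using finL by (intro Max_ge) auto
    then show False by simp
  qed
  then show ?thesis using that g card_lspan_indep_tuple[OF g] by auto
qed

lemma card_subspace_eq_power:
  assumes "is_subspace U" "finite U"
  obtains d where "card U = card F ^ d"
  using exists_basis[OF assms] by metis

lemma indep_tuple_extend_to:
  assumes U: "is_subspace U" "card U = card F ^ d"
    and g: "g \<in> indep_tuples U l" and "l \<le> l'" "l' \<le> d"
  obtains h where "h \<in> indep_tuples U l'" "\<forall>i<l. h i = g i"
proof -
  have "\<exists>h \<in> indep_tuples U l'. \<forall>i<l. h i = g i"
    using \<open>l \<le> l'\<close> \<open>l' \<le> d\<close>
  proof (induct l' rule: dec_induct)
    case base then show ?case using g by blast
  next
    case (step m)
    then obtain h where h: "h \<in> indep_tuples U m" "\<forall>i<l. h i = g i" by auto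
    have "card (lspan h {..<m}) < card U"
      using card_lspan_indep_tuple[OF h(1)] U(2) step power_card_F_less_iff by simp
    then have "lspan h {..<m} \<noteq> U" by auto
    then obtain v where "v \<in> U" "v \<notin> lspan h {..<m}" using lspan_indep_tuple_subset[OF U(1) h(1)]
      by blast
    then have "h(m := v) \<in> indep_tuples U (Suc m)" using h by (intro indep_tuples_extend) auto
    moreover have "\<forall>i<l. (h(m := v)) i = g i" using h step by auto
    ultimately show ?case by blast
  qed
  then show ?thesis using that by blast
qed

lemma lspan_indep_tuple_eq:
  assumes U: "is_subspace U" "finite U" and g: "g \<in> indep_tuples U l" and "card U = card F ^ l"
  shows "lspan g {..<l} = U"
  using card_subset_eq[OF U(2) lspan_indep_tuple_subset[OF U(1) g]] card_lspan_indep_tuple[OF g] assms(4)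
  by simp

lemma card_lspan_eq_Max_indep:
  assumes I: "finite I"
  shows "card (lspan g I) = card F ^ Max {card S | S. S \<subseteq> I \<and> indep g S}"
proof -
  let ?M = "{card S | S. S \<subseteq> I \<and> indep g S}"
  have finM: "finite ?M" using I by simp
  have "0 \<in> ?M" by (force simp: indep_def)
  then have "Max ?M \<in> ?M" using finM by (intro Max_in) auto
  then obtain S where S: "Max ?M = card S" "S \<subseteq> I" "indep g S" by auto
  have finS: "finite S" using S(2) I finite_subset by blast
  have gens: "g j \<in> lspan g S" if "j \<in> I" for j
  proof (cases "j \<in> S")
    case True then show ?thesis using in_lspan[OF finS] by blast
  next
    case False
    show ?thesis
    proof (rule ccontr)
      assume "g j \<notin> lspan g S"
      then have "indep g (insert j S)" using indep_insert[OF finS S(3) False] by blast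
      then have "card (insert j S) \<le> Max ?M" using finM S(2) that by (intro Max_ge) auto
      then show False using S(1) finS False by simp
    qed
  qed
  have "lspan g I = lspan g S"
  proof
    show "lspan g I \<subseteq> lspan g S" using gens by (intro lspan_subset subspace_lspan)
    show "lspan g S \<subseteq> lspan g I" using S(2) I in_lspan by (intro lspan_subset subspace_lspan) blast
  qed
  then show ?thesis using S card_lspan[OF finS] by simp
qed

lemma subspace_plus:
  assumes H: "is_subspace H" and K: "is_subspace K"
  shows "is_subspace {a + b | a b. a \<in> H \<and> b \<in> K}"
  unfolding is_subspace_def
proof (intro conjI ballI)
  show "0 \<in> {a + b | a b. a \<in> H \<and> b \<in> K}" using H K by (force simp: is_subspace_def)
  fix x y assume "x \<in> {a + b | a b. a \<in> H \<and> b \<in> K}" "y \<in> {a + b | a b. a \<in> H \<and> b \<in> K}"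
  then obtain a b a' b' where "x = a + b" "y = a' + b'" "a \<in> H" "a' \<in> H" "b \<in> K" "b' \<in> K" by blast
  moreover have "x + y = (a + a') + (b + b')" if "x = a + b" "y = a' + b'" using that
    by (simp add: ac_simps)
  ultimately show "x + y \<in> {a + b | a b. a \<in> H \<and> b \<in> K}" using H K unfolding is_subspace_def
    by blast
next
  fix c x assume "c \<in> F" "x \<in> {a + b | a b. a \<in> H \<and> b \<in> K}"
  then obtain a b where ab: "x = a + b" "a \<in> H" "b \<in> K" by blast
  then have "scale c a \<in> H" "scale c b \<in> K" using H K \<open>c \<in> F\<close> unfolding is_subspace_def by auto
  then show "scale c x \<in> {a + b | a b. a \<in> H \<and> b \<in> K}"
    unfolding ab(1) scale_right_distrib by blast
qed

text \<open>The fibres of \<open>(a, b) \<mapsto> a + b\<close> on \<open>H \<times> K\<close> are translates of \<open>H \<inter> K\<close>.\<close>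
lemma card_plus_mult_card_inter:
  assumes H: "is_subspace H" "finite H" and K: "is_subspace K" "finite K"
  shows "card {a + b | a b. a \<in> H \<and> b \<in> K} * card (H \<inter> K) = card H * card K"
proof -
  let ?f = "\<lambda>p. fst p + snd p"
  have fibre: "card {p \<in> H \<times> K. ?f p = y} = card (H \<inter> K)" if y: "y \<in> ?f ` (H \<times> K)" for y
  proof -
    obtain a0 b0 where ab0: "a0 \<in> H" "b0 \<in> K" "y = a0 + b0" using y by force
    have "{p \<in> H \<times> K. ?f p = y} = (\<lambda>d. (a0 + d, b0 - d)) ` (H \<inter> K)"
    proof (intro set_eqI iffI)
      fix p assume "p \<in> {p \<in> H \<times> K. ?f p = y}"
      then obtain a b where ab: "p = (a, b)" "a \<in> H" "b \<in> K" "a + b = y" by auto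
      have d: "a - a0 = b0 - b" using ab(4) ab0(3) by (simp add: algebra_simps)
      have b: "b = b0 - (a - a0)" unfolding d by simp
      have "a - a0 \<in> H \<inter> K"
        using subspace_diff[OF H(1) ab(2) ab0(1)] subspace_diff[OF K(1) ab0(2) ab(3)] d by simp
      moreover have "p = (a0 + (a - a0), b0 - (a - a0))" using ab(1) b by simp
      ultimately show "p \<in> (\<lambda>d. (a0 + d, b0 - d)) ` (H \<inter> K)" by blast
    next
      fix p assume "p \<in> (\<lambda>d. (a0 + d, b0 - d)) ` (H \<inter> K)"
      then obtain d where "p = (a0 + d, b0 - d)" "d \<in> H" "d \<in> K" by auto
      then show "p \<in> {p \<in> H \<times> K. ?f p = y}"
        using H(1) ab0 subspace_diff[OF K(1) ab0(2)] unfolding is_subspace_def by auto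
    qed
    moreover have "inj_on (\<lambda>d. (a0 + d, b0 - d)) (H \<inter> K)" by (rule inj_onI) simp
    ultimately show ?thesis by (simp add: card_image)
  qed
  have "?f ` (H \<times> K) = {a + b | a b. a \<in> H \<and> b \<in> K}" by force
  moreover have "card (H \<times> K) = card (?f ` (H \<times> K)) * card (H \<inter> K)"
    by (rule card_eq_card_image_mult) (use H K fibre in auto)
  ultimately show ?thesis by (simp add: card_cartesian_product)
qed

end

section \<open>Rank and linear relations among coordinates\<close>

text \<open>\<open>Fvecs\<close> is \<open>F\<^sup>n\<close>, and \<open>relations x\<close> is the space of \<open>F\<close>-linear relations
  among the coordinates of \<open>x\<close>, the kernel of \<open>dot x : F\<^sup>n \<rightarrow> 'a\<close>.\<close>
locale rank_setting =
  fixes F :: "'a::{field,finite} set" and n :: nat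
  assumes subfield: "is_subfield F"
begin

sublocale Ext: subfield_space F "(*) :: 'a \<Rightarrow> 'a \<Rightarrow> 'a"
  by unfold_locales (auto simp: subfield algebra_simps)

sublocale Vec: subfield_space F "\<lambda>(c::'a) (f::nat \<Rightarrow> 'a) i. c * f i"
  by unfold_locales (auto simp: subfield algebra_simps fun_eq_iff)

definition Fvecs :: "(nat \<Rightarrow> 'a) set" where
  "Fvecs = {a. (\<forall>i<n. a i \<in> F) \<and> (\<forall>i\<ge>n. a i = 0)}"

definition dot :: "(nat \<Rightarrow> 'a) \<Rightarrow> (nat \<Rightarrow> 'a) \<Rightarrow> 'a" where
  "dot x a = (\<Sum>i<n. a i * x i)"

definition relations :: "(nat \<Rightarrow> 'a) \<Rightarrow> (nat \<Rightarrow> 'a) set" where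
  "relations x = {a \<in> Fvecs. dot x a = 0}"

definition coords :: "(nat \<Rightarrow> nat \<Rightarrow> 'a) \<Rightarrow> (nat \<Rightarrow> 'a) \<Rightarrow> (nat \<Rightarrow> 'a)" where
  "coords G e = (\<lambda>j. if j < n then dot e (G j) else 0)"

lemma Fvecs_eq_funs_fixed_outside:
  "Fvecs = {w. (\<forall>j\<in>{..<n}. w j \<in> F) \<and> (\<forall>j. j \<notin> {..<n} \<longrightarrow> w j = (\<lambda>_. 0) j)}"
  by (auto simp: Fvecs_def)

lemma card_Fvecs: "card Fvecs = card F ^ n"
  unfolding Fvecs_eq_funs_fixed_outside using card_funs_fixed_outside[of "{..<n}" F "\<lambda>_. 0"] by simp

lemma finite_Fvecs: "finite Fvecs"
  unfolding Fvecs_eq_funs_fixed_outside by (rule finite_funs_fixed_outside) auto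

lemma subspace_Fvecs: "Vec.is_subspace Fvecs"
  unfolding Vec.is_subspace_def Fvecs_def using Vec.F_closed by auto

lemma dot_add: "dot x (a + b) = dot x a + dot x b"
  by (simp add: dot_def algebra_simps sum.distrib)

lemma dot_scale: "dot x (\<lambda>i. c * a i) = c * dot x a"
  by (simp add: dot_def sum_distrib_left mult.assoc)

lemma dot_zero_right: "dot x 0 = 0"
  by (simp add: dot_def)

lemma dot_diff_right: "dot x (a - b) = dot x a - dot x b"
  by (simp add: dot_def algebra_simps sum_subtractf)

lemma dot_diff_left: "dot (x - y) a = dot x a - dot y a"
  by (simp add: dot_def algebra_simps sum_subtractf)

lemma dot_lincomb: "dot x (Vec.lincomb g c S) = (\<Sum>i\<in>S. c i * dot x (g i))"
proof -
  have "dot x (Vec.lincomb g c S) = (\<Sum>j<n. \<Sum>i\<in>S. c i * (g i j * x j))"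
    by (simp add: dot_def Vec.lincomb_def sum_fun_apply sum_distrib_right mult.assoc)
  also have "\<dots> = (\<Sum>i\<in>S. c i * dot x (g i))"
    by (subst sum.swap) (simp add: dot_def sum_distrib_left)
  finally show ?thesis .
qed

lemma subspace_relations: "Vec.is_subspace (relations x)"
  using subspace_Fvecs unfolding Vec.is_subspace_def relations_def
  by (auto simp: dot_add dot_scale dot_zero_right)

lemma relations_subset: "relations x \<subseteq> Fvecs"
  by (auto simp: relations_def)

lemma finite_relations: "finite (relations x)"
  using finite_Fvecs relations_subset by (rule finite_subset[rotated])

lemma finite_vecs_filter [simp]: "finite {e \<in> (vecs m :: (nat \<Rightarrow> 'a) set). P e}"
  by (rule finite_subset[OF _ finite_vecs]) auto

lemma rk_le: "rk F n x \<le> n"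
  unfolding rk_def
proof (rule Max.boundedI)
  show "finite {card S | S. S \<subseteq> {..<n} \<and> lin_indep_over F x S}" by simp
  show "{card S | S. S \<subseteq> {..<n} \<and> lin_indep_over F x S} \<noteq> {}"
    by (auto simp: lin_indep_over_def intro!: exI[of _ "{}"])
qed (auto dest: card_mono[rotated])

lemma card_lspan_coordinates: "card (Ext.lspan x {..<n}) = card F ^ rk F n x"
proof -
  have "lin_indep_over F x S = Ext.indep x S" for S
    unfolding lin_indep_over_def Ext.indep_def Ext.lincomb_def by blast
  then show ?thesis by (simp add: Ext.card_lspan_eq_Max_indep rk_def)
qed

lemma dot_image_Fvecs: "dot x ` Fvecs = Ext.lspan x {..<n}"
proof
  show "dot x ` Fvecs \<subseteq> Ext.lspan x {..<n}"
    unfolding Ext.lspan_def Ext.lincomb_def dot_def Fvecs_def by auto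
  show "Ext.lspan x {..<n} \<subseteq> dot x ` Fvecs"
  proof
    fix y assume "y \<in> Ext.lspan x {..<n}"
    then obtain c where c: "y = Ext.lincomb x c {..<n}" "\<forall>i<n. c i \<in> F"
      unfolding Ext.lspan_def by blast
    let ?a = "\<lambda>i. if i < n then c i else 0"
    have "?a \<in> Fvecs" "dot x ?a = y" using c by (auto simp: Fvecs_def dot_def Ext.lincomb_def)
    then show "y \<in> dot x ` Fvecs" by force
  qed
qed

text \<open>Rank--nullity for \<open>dot x\<close>, whose image is the \<open>F\<close>-span of the coordinates of \<open>x\<close>.\<close>
lemma card_relations: "card (relations x) = card F ^ (n - rk F n x)"
proof -
  have fibre: "card {a \<in> Fvecs. dot x a = y} = card (relations x)" if y: "y \<in> dot x ` Fvecs" for y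
  proof -
    obtain a0 where a0: "a0 \<in> Fvecs" "y = dot x a0" using y by blast
    have "{a \<in> Fvecs. dot x a = y} = (\<lambda>b. b + a0) ` relations x"
    proof (intro set_eqI iffI)
      fix a assume a: "a \<in> {a \<in> Fvecs. dot x a = y}"
      then have "a - a0 \<in> relations x"
        using a0 Vec.subspace_diff[OF subspace_Fvecs] by (auto simp: relations_def dot_diff_right)
      then show "a \<in> (\<lambda>b. b + a0) ` relations x" by (auto intro: image_eqI[of _ _ "a - a0"])
    qed (use a0 subspace_Fvecs in \<open>auto simp: relations_def dot_add Vec.is_subspace_def\<close>)
    moreover have "inj_on (\<lambda>b. b + a0) (relations x)" by (auto intro: inj_onI)
    ultimately show ?thesis by (simp add: card_image)
  qed
  have "card F ^ n = card F ^ rk F n x * card (relations x)"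
    using card_eq_card_image_mult[OF finite_Fvecs fibre]
    by (simp add: card_Fvecs dot_image_Fvecs card_lspan_coordinates)
  also have "card F ^ n = card F ^ rk F n x * card F ^ (n - rk F n x)"
    using rk_le by (simp flip: power_add)
  finally show ?thesis using Ext.card_F_ge_2 by (cases "F = {}") auto
qed

lemma rk_eq_iff_card_relations: "u \<le> n \<Longrightarrow> rk F n e = u \<longleftrightarrow> card (relations e) = card F ^ (n - u)"
  using rk_le[of e] by (auto simp: card_relations Vec.power_card_F_inject)

lemma subset_relations_iff: "S \<subseteq> Fvecs \<Longrightarrow> S \<subseteq> relations x \<longleftrightarrow> (\<forall>a\<in>S. dot x a = 0)"
  by (auto simp: relations_def)

lemma inter_subset_relations:
  assumes "SA \<subseteq> relations (e - x)" "SB \<subseteq> relations e"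
  shows "SA \<inter> SB \<subseteq> relations x"
proof
  fix v assume "v \<in> SA \<inter> SB"
  then have "v \<in> Fvecs" "dot (e - x) v = 0" "dot e v = 0" using assms by (auto simp: relations_def)
  then show "v \<in> relations x" by (simp add: relations_def dot_diff_left)
qed

lemma dim_subspace_le:
  assumes "S \<subseteq> Fvecs" "card S = card F ^ s"
  shows "s \<le> n"
  using card_mono[OF finite_Fvecs assms(1)] assms(2) card_Fvecs Vec.power_card_F_le_iff by simp

lemma extend_subspace_basis:
  assumes S: "Vec.is_subspace S" "S \<subseteq> Fvecs" "card S = card F ^ s" and "s \<le> l" "l \<le> n"
  obtains G where "G \<in> Vec.indep_tuples Fvecs l" "\<forall>j<s. G j \<in> S"
proof -
  obtain s' g where g: "g \<in> Vec.indep_tuples S s'" "card S = card F ^ s'"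
    using Vec.exists_basis[OF S(1) finite_subset[OF S(2) finite_Fvecs]] by blast
  then have "s' = s" using S(3) Vec.power_card_F_inject by simp
  then have "g \<in> Vec.indep_tuples Fvecs s" using g(1) Vec.indep_tuples_mono[OF S(2)] by blast
  then obtain G where "G \<in> Vec.indep_tuples Fvecs l" "\<forall>j<s. G j = g j"
    using Vec.indep_tuple_extend_to[OF subspace_Fvecs card_Fvecs] assms(4,5) by metis
  then show ?thesis using that g(1) \<open>s' = s\<close> by (auto simp: Vec.indep_tuples_def)
qed

lemma lspan_basis_Fvecs: "G \<in> Vec.indep_tuples Fvecs n \<Longrightarrow> Vec.lspan G {..<n} = Fvecs"
  by (rule Vec.lspan_indep_tuple_eq[OF subspace_Fvecs finite_Fvecs _ card_Fvecs])

lemma eq_zero_if_Fvecs_subset_relations: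
  assumes "Fvecs \<subseteq> relations y" "y \<in> vecs n"
  shows "y = 0"
proof
  fix i
  show "y i = 0 i"
  proof (cases "i < n")
    case True
    have "(\<lambda>j. if j = i then 1 else 0) \<in> Fvecs" using True Vec.F_closed by (auto simp: Fvecs_def)
    then have "dot y (\<lambda>j. if j = i then 1 else 0) = 0" using assms(1) by (auto simp: relations_def)
    moreover have "dot y (\<lambda>j. if j = i then 1 else 0) = (\<Sum>j<n. if j = i then y j else 0)"
      unfolding dot_def by (rule sum.cong) auto
    moreover have "\<dots> = y i" using True by simp
    ultimately show ?thesis by simp
  qed (use assms(2) in \<open>simp add: vecs_def\<close>)
qed

lemma inj_on_coords:
  assumes G: "G \<in> Vec.indep_tuples Fvecs n"
  shows "inj_on (coords G) (vecs n)"
proof (rule inj_onI)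
  fix e e' assume e: "e \<in> vecs n" "e' \<in> vecs n" and eq: "coords G e = coords G e'"
  have "dot (e - e') (G j) = 0" if "j < n" for j
    using fun_cong[OF eq, of j] that by (simp add: coords_def dot_diff_left)
  then have "Vec.lspan G {..<n} \<subseteq> relations (e - e')"
    using G
    by (intro Vec.lspan_subset subspace_relations) (auto simp: relations_def Vec.indep_tuples_def)
  then have "Fvecs \<subseteq> relations (e - e')" using lspan_basis_Fvecs[OF G] by simp
  then have "e - e' = 0" using vecs_diff[OF e] by (rule eq_zero_if_Fvecs_subset_relations)
  then show "e = e'" by simp
qed

lemma coords_image:
  assumes G: "G \<in> Vec.indep_tuples Fvecs n"
  shows "coords G ` vecs n = vecs n"
proof -
  have "coords G ` vecs n \<subseteq> vecs n" by (auto simp: coords_def vecs_def)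
  moreover have "card (coords G ` vecs n) = card (vecs n :: (nat \<Rightarrow> 'a) set)"
    using inj_on_coords[OF G] by (simp add: card_image)
  ultimately show ?thesis using card_subset_eq[OF finite_vecs] by blast
qed

section \<open>Counting error vectors\<close>

definition rank_separated :: "nat \<Rightarrow> (nat \<Rightarrow> 'a) set \<Rightarrow> bool" where
  "rank_separated d X \<longleftrightarrow> (\<forall>x\<in>X. \<forall>y\<in>X. x \<noteq> y \<longrightarrow> d < rk F n (x - y))"

lemma rank_separated_subset: "rank_separated d X \<Longrightarrow> Y \<subseteq> X \<Longrightarrow> rank_separated d Y"
  by (auto simp: rank_separated_def)

lemma card_relations_less_if_separated:
  assumes "rank_separated (n - k) (insert 0 X)" "x \<in> X" "0 \<notin> X"
  shows "card (relations x) < card F ^ k"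
proof -
  have "n - k < rk F n x" using assms by (force simp: rank_separated_def)
  then show ?thesis using card_relations Vec.power_card_F_less_iff rk_le[of x] by simp
qed

lemma card_annihilator_le:
  assumes S: "Vec.is_subspace S" "S \<subseteq> Fvecs" "card S = card F ^ s"
  shows "card {e \<in> vecs n. S \<subseteq> relations e} \<le> CARD('a) ^ (n - s)"
proof -
  have "s \<le> n" by (rule dim_subspace_le[OF S(2,3)])
  then obtain G where G: "G \<in> Vec.indep_tuples Fvecs n" "\<forall>j<s. G j \<in> S"
    by (rule extend_subspace_basis[OF S _ order_refl])
  have "inj_on (coords G) {e \<in> vecs n. S \<subseteq> relations e}"
    using inj_on_coords[OF G(1)] by (rule inj_on_subset) auto
  moreover have "coords G e j = 0" if e: "e \<in> {e \<in> vecs n. S \<subseteq> relations e}" and j: "j \<notin> {s..<n}" for e j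
  proof (cases "j < n")
    case True
    then have "G j \<in> relations e" using G(2) e j by auto
    then show ?thesis using True by (simp add: coords_def relations_def)
  qed (simp add: coords_def)
  ultimately have "card {e \<in> vecs n. S \<subseteq> relations e} \<le> CARD('a) ^ card {s..<n}"
    by (rule card_le_if_inj_vanishing_outside) auto
  then show ?thesis by simp
qed

text \<open>Extend a basis of \<open>D\<close> to \<open>k\<close> independent vectors \<open>H\<close>. The map sending \<open>x\<close> to
  \<open>(dot x (H j))\<close> for \<open>j < k\<close> vanishes on the first \<open>d\<close> places, and it is injective on \<open>X\<close>
  because a difference of rank \<open>> n - k\<close> has fewer than \<open>q\<^sup>k\<close> relations.\<close>
lemma card_vanishing_le:
  assumes D: "Vec.is_subspace D" "D \<subseteq> Fvecs" "card D = card F ^ d" and "d \<le> k" "k \<le> n"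
    and sep: "rank_separated (n - k) X"
  shows "card {x \<in> X. D \<subseteq> relations x} \<le> CARD('a) ^ (k - d)"
proof -
  obtain H where H: "H \<in> Vec.indep_tuples Fvecs k" "\<forall>j<d. H j \<in> D"
    using extend_subspace_basis[OF D assms(4,5)] by blast
  define psi where "psi x = (\<lambda>j. if j < k then dot x (H j) else 0)" for x
  have "inj_on psi {x \<in> X. D \<subseteq> relations x}"
  proof (rule inj_onI)
    fix x x' assume x: "x \<in> {x \<in> X. D \<subseteq> relations x}" "x' \<in> {x \<in> X. D \<subseteq> relations x}"
      and eq: "psi x = psi x'"
    have "dot (x - x') (H j) = 0" if "j < k" for j
      using fun_cong[OF eq, of j] that by (simp add: psi_def dot_diff_left)
    then have "Vec.lspan H {..<k} \<subseteq> relations (x - x')"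
      using H(1)
      by (intro Vec.lspan_subset subspace_relations) (auto simp: relations_def Vec.indep_tuples_def)
    then have "card F ^ k \<le> card F ^ (n - rk F n (x - x'))"
      using Vec.card_lspan_indep_tuple[OF H(1)] card_relations finite_relations by (metis card_mono)
    then have "\<not> n - k < rk F n (x - x')" using Vec.power_card_F_le_iff rk_le[of "x - x'"] by simp
    then show "x = x'" using sep x by (auto simp: rank_separated_def)
  qed
  moreover have "psi x j = 0" if x: "x \<in> {x \<in> X. D \<subseteq> relations x}" and j: "j \<notin> {d..<k}" for x j
  proof (cases "j < k")
    case True
    then have "H j \<in> relations x" using H(2) x j by auto
    then show ?thesis using True by (simp add: psi_def relations_def)
  qed (simp add: psi_def)
  ultimately have "card {x \<in> X. D \<subseteq> relations x} \<le> CARD('a) ^ card {d..<k}"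
    by (rule card_le_if_inj_vanishing_outside) auto
  then show ?thesis by simp
qed

lemma plus_subset_Fvecs: "SA \<subseteq> Fvecs \<Longrightarrow> SB \<subseteq> Fvecs \<Longrightarrow> {a + b | a b. a \<in> SA \<and> b \<in> SB} \<subseteq> Fvecs"
  using subspace_Fvecs unfolding Vec.is_subspace_def by blast

lemma card_compatible_errors_le:
  assumes SA: "Vec.is_subspace SA" "SA \<subseteq> Fvecs" and SB: "Vec.is_subspace SB" "SB \<subseteq> Fvecs"
    and s: "card {a + b | a b. a \<in> SA \<and> b \<in> SB} = card F ^ s"
  shows "card {e \<in> vecs n. SA \<subseteq> relations (e - x) \<and> SB \<subseteq> relations e} \<le> CARD('a) ^ (n - s)"
proof (cases "{e \<in> vecs n. SA \<subseteq> relations (e - x) \<and> SB \<subseteq> relations e} = {}")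
  case False
  then obtain e0 where e0: "e0 \<in> vecs n" "SA \<subseteq> relations (e0 - x)" "SB \<subseteq> relations e0" by blast
  define S where "S = {a + b | a b. a \<in> SA \<and> b \<in> SB}"
  have S: "Vec.is_subspace S" "S \<subseteq> Fvecs"
    unfolding S_def using Vec.subspace_plus[OF SA(1) SB(1)] plus_subset_Fvecs[OF SA(2) SB(2)] .
  have "(\<lambda>e. e - e0) ` {e \<in> vecs n. SA \<subseteq> relations (e - x) \<and> SB \<subseteq> relations e}
      \<subseteq> {e \<in> vecs n. S \<subseteq> relations e}" (is "_ ` ?E \<subseteq> ?A")
  proof clarify
    fix e assume e: "e \<in> vecs n" "SA \<subseteq> relations (e - x)" "SB \<subseteq> relations e"
    have "dot (e - e0) (a + b) = 0" if "a \<in> SA" "b \<in> SB" for a b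
    proof -
      have "dot e a = dot x a" "dot e0 a = dot x a" "dot e b = 0" "dot e0 b = 0"
        using that e e0 by (auto simp: relations_def dot_diff_left)
      then show ?thesis by (simp add: dot_add dot_diff_left)
    qed
    then show "e - e0 \<in> vecs n \<and> S \<subseteq> relations (e - e0)"
      using vecs_diff[OF e(1) e0(1)] S(2) by (auto simp: subset_relations_iff S_def)
  qed
  moreover have "inj_on (\<lambda>e. e - e0) ?E" by (rule inj_onI) simp
  moreover have "finite ?A" by simp
  ultimately have "card ?E \<le> card ?A" by (intro card_inj_on_le)
  also have "\<dots> \<le> CARD('a) ^ (n - s)" using card_annihilator_le[OF S] s by (simp add: S_def)
  finally show ?thesis .
next
  case True
  then show ?thesis by (simp only: card.empty)
qed

lemma dim_plus_inter:
  assumes SA: "Vec.is_subspace SA" "SA \<subseteq> Fvecs" "card SA = card F ^ a"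
    and SB: "Vec.is_subspace SB" "SB \<subseteq> Fvecs" "card SB = card F ^ b"
  obtains s d where "card {a + b | a b. a \<in> SA \<and> b \<in> SB} = card F ^ s" "card (SA \<inter> SB) = card F ^ d"
    "s + d = a + b"
proof -
  have fin: "finite SA" "finite SB" using SA(2) SB(2) finite_Fvecs by (auto intro: finite_subset)
  have "Vec.is_subspace (SA \<inter> SB)" using SA(1) SB(1) unfolding Vec.is_subspace_def by auto
  then obtain d where d: "card (SA \<inter> SB) = card F ^ d"
    using Vec.card_subspace_eq_power fin by blast
  have "Vec.is_subspace {a + b | a b. a \<in> SA \<and> b \<in> SB}" using Vec.subspace_plus SA(1) SB(1) .
  moreover have "finite {a + b | a b. a \<in> SA \<and> b \<in> SB}"
    using plus_subset_Fvecs[OF SA(2) SB(2)] finite_Fvecs by (rule finite_subset)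
  ultimately obtain s where s: "card {a + b | a b. a \<in> SA \<and> b \<in> SB} = card F ^ s"
    using Vec.card_subspace_eq_power by blast
  have "card F ^ (s + d) = card F ^ (a + b)"
    using Vec.card_plus_mult_card_inter[OF SA(1) fin(1) SB(1) fin(2)] d s SA(3) SB(3)
    by (simp add: power_add)
  then show ?thesis using that d s Vec.power_card_F_inject by blast
qed

text \<open>A pair \<open>(x, e)\<close> counted here has \<open>SA \<inter> SB \<subseteq> relations x\<close>, which bounds the number
  of \<open>x\<close>; for fixed \<open>x\<close> the admissible \<open>e\<close> form a translate of a subset of the annihilator
  of \<open>SA + SB\<close>.\<close>
lemma card_compatible_pairs_le:
  assumes SA: "Vec.is_subspace SA" "SA \<subseteq> Fvecs" "card SA = card F ^ a"
    and SB: "Vec.is_subspace SB" "SB \<subseteq> Fvecs" "card SB = card F ^ b"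
    and "k \<le> n" and X: "X \<subseteq> vecs n" "0 \<notin> X" and sep: "rank_separated (n - k) (insert 0 X)"
  shows "card {(x, e). x \<in> X \<and> e \<in> vecs n \<and> SA \<subseteq> relations (e - x) \<and> SB \<subseteq> relations e}
           \<le> CARD('a) ^ (k + n - a - b)"
proof -
  define P where "P = {(x, e). x \<in> X \<and> e \<in> vecs n \<and> SA \<subseteq> relations (e - x) \<and> SB \<subseteq> relations e}"
  define D where "D = SA \<inter> SB"
  obtain s d where s: "card {a + b | a b. a \<in> SA \<and> b \<in> SB} = card F ^ s"
    and d: "card D = card F ^ d" and sd: "s + d = a + b"
    unfolding D_def by (rule dim_plus_inter[OF SA SB])
  have D: "Vec.is_subspace D" "D \<subseteq> Fvecs" using SA SB unfolding D_def Vec.is_subspace_def by auto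
  have "s \<le> n" using dim_subspace_le[OF plus_subset_Fvecs[OF SA(2) SB(2)] s] .
  have D_rel: "D \<subseteq> relations x" if "(x, e) \<in> P" for x e
    unfolding D_def by (rule inter_subset_relations) (use that in \<open>auto simp: P_def\<close>)
  show ?thesis
  proof (cases "d \<le> k")
    case False
    have "P = {}"
    proof (rule ccontr)
      assume "P \<noteq> {}"
      then obtain x e where xe: "(x, e) \<in> P" by auto
      then have "card D \<le> card (relations x)" using D_rel finite_relations by (intro card_mono) auto
      also have "\<dots> < card F ^ k" using xe X(2) sep
        by (intro card_relations_less_if_separated) (auto simp: P_def)
      finally show False using d False Vec.power_card_F_less_iff by simp
    qed
    then show ?thesis by (simp flip: P_def)
  next
    case True
    let ?Xd = "{x \<in> X. D \<subseteq> relations x}"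
    let ?E = "\<lambda>x. {e \<in> vecs n. SA \<subseteq> relations (e - x) \<and> SB \<subseteq> relations e}"
    have finXd: "finite ?Xd" using X(1) finite_vecs by (auto intro: finite_subset)
    have "P \<subseteq> Sigma ?Xd ?E" using D_rel by (auto simp: P_def)
    then have "card P \<le> card (Sigma ?Xd ?E)" using finXd by (intro card_mono finite_SigmaI) auto
    also have "\<dots> = (\<Sum>x\<in>?Xd. card (?E x))" using finXd by (intro card_SigmaI) auto
    also have "\<dots> \<le> (\<Sum>x\<in>?Xd. CARD('a) ^ (n - s))"
      by (intro sum_mono card_compatible_errors_le[OF SA(1,2) SB(1,2) s])
    also have "\<dots> \<le> CARD('a) ^ (k - d) * CARD('a) ^ (n - s)"
      using card_vanishing_le[OF D d True \<open>k \<le> n\<close> rank_separated_subset[OF sep subset_insertI]]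
      by (simp add: mult_right_mono)
    also have "\<dots> = CARD('a) ^ (k + n - a - b)"
      using sd True \<open>s \<le> n\<close> by (simp flip: power_add) (simp add: algebra_simps)
    finally show ?thesis unfolding P_def .
  qed
qed

lemma relations_eq_lspan_prefix:
  assumes G: "G \<in> Vec.indep_tuples Fvecs n" and "l \<le> n" and zero: "\<forall>j<l. dot e (G j) = 0"
    and ind: "Ext.indep (\<lambda>i. dot e (G (l + i))) {..<n - l}"
  shows "relations e = Vec.lspan G {..<l}"
proof
  have G_Fvecs: "G j \<in> Fvecs" if "j < n" for j using G that by (auto simp: Vec.indep_tuples_def)
  show "Vec.lspan G {..<l} \<subseteq> relations e"
    using zero G_Fvecs \<open>l \<le> n\<close>
    by (intro Vec.lspan_subset subspace_relations) (auto simp: relations_def)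
  show "relations e \<subseteq> Vec.lspan G {..<l}"
  proof
    fix a assume a: "a \<in> relations e"
    then have "a \<in> Vec.lspan G {..<n}" using lspan_basis_Fvecs[OF G] by (auto simp: relations_def)
    then obtain c where c: "a = Vec.lincomb G c {..<n}" "\<forall>i<n. c i \<in> F" unfolding Vec.lspan_def
      by blast
    have "0 = (\<Sum>j<n. c j * dot e (G j))" using a c(1) by (simp add: relations_def dot_lincomb)
    also have "\<dots> = (\<Sum>j\<in>{l..<n}. c j * dot e (G j))"
      using zero by (intro sum.mono_neutral_right) auto
    also have "\<dots> = Ext.lincomb (\<lambda>i. dot e (G (l + i))) (\<lambda>i. c (l + i)) {..<n - l}"
      unfolding Ext.lincomb_def using \<open>l \<le> n\<close>
      by (intro sum.reindex_bij_witness[where i = "\<lambda>i. l + i" and j = "\<lambda>j. j - l"]) auto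
    finally have z: "Ext.lincomb (\<lambda>i. dot e (G (l + i))) (\<lambda>i. c (l + i)) {..<n - l} = 0" ..
    have "c (l + i) = 0" if "i < n - l" for i
      using Ext.indepD[OF ind, of "\<lambda>i. c (l + i)" i] z c(2) that by simp
    then have "a = Vec.lincomb G c {..<l}"
      unfolding c(1) using \<open>l \<le> n\<close> by (intro Vec.lincomb_mono_neutral) (auto dest!: le_Suc_ex)
    then show "a \<in> Vec.lspan G {..<l}" using c(2) \<open>l \<le> n\<close> by (auto intro!: Vec.lincomb_in_lspan)
  qed
qed

text \<open>Extend \<open>B\<close> to a basis \<open>G\<close> of \<open>F\<^sup>n\<close> and prescribe \<open>coords G e\<close> to be \<open>0\<close>
  on the first \<open>n - u\<close> places and the \<open>F\<close>-independent entries of \<open>v\<close> on the last \<open>u\<close>.\<close>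
lemma exists_inj_vectors_with_relations:
  assumes B: "B \<in> Vec.indep_tuples Fvecs (n - u)" and "u \<le> n"
  shows "\<exists>f. inj_on f (Ext.indep_tuples UNIV u) \<and>
    (\<forall>v\<in>Ext.indep_tuples UNIV u. f v \<in> vecs n \<and> relations (f v) = Vec.lspan B {..<n - u})"
proof -
  obtain G where G: "G \<in> Vec.indep_tuples Fvecs n" "\<forall>j<n - u. G j = B j"
    using Vec.indep_tuple_extend_to[OF subspace_Fvecs card_Fvecs B]
    by (metis diff_le_self order_refl)
  define shift where "shift v = (\<lambda>j. if n - u \<le> j \<and> j < n then v (j - (n - u)) else 0)" for v :: "nat \<Rightarrow> 'a"
  have shift_at: "shift v (n - u + i) = v i" if "i < u" for v i
    using that \<open>u \<le> n\<close> by (auto simp: shift_def)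
  define f where "f v = the_inv_into (vecs n) (coords G) (shift v)" for v
  have f: "f v \<in> vecs n" "coords G (f v) = shift v" for v
  proof -
    have img: "shift v \<in> coords G ` vecs n" using coords_image[OF G(1)]
      by (auto simp: shift_def vecs_def)
    show "f v \<in> vecs n" unfolding f_def
      by (rule the_inv_into_into[OF inj_on_coords[OF G(1)] img order_refl])
    show "coords G (f v) = shift v" unfolding f_def
      by (rule f_the_inv_into_f[OF inj_on_coords[OF G(1)] img])
  qed
  have dot_f: "dot (f v) (G j) = shift v j" if "j < n" for v j
    using fun_cong[OF f(2), of v j] that by (simp add: coords_def)
  have "v = v'" if "v \<in> Ext.indep_tuples UNIV u" "v' \<in> Ext.indep_tuples UNIV u" "f v = f v'" for v v'
  proof
    fix i
    have "shift v = shift v'" using f(2) that(3) by metis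
    then show "v i = v' i"
      using shift_at[of i v] shift_at[of i v'] that(1,2)
      by (cases "i < u") (auto simp: Ext.indep_tuples_def)
  qed
  moreover have "relations (f v) = Vec.lspan B {..<n - u}" if v: "v \<in> Ext.indep_tuples UNIV u" for v
  proof -
    have "dot (f v) (G (n - u + i)) = v i" if "i < u" for i
      using dot_f[of "n - u + i" v] shift_at[OF that] that \<open>u \<le> n\<close> by simp
    then have "Ext.indep (\<lambda>i. dot (f v) (G (n - u + i))) {..<n - (n - u)}"
      using v \<open>u \<le> n\<close> by (subst Ext.indep_cong[of _ _ v]) (auto simp: Ext.indep_tuples_def)
    moreover have "\<forall>j<n - u. dot (f v) (G j) = 0" using dot_f by (simp add: shift_def)
    ultimately have "relations (f v) = Vec.lspan G {..<n - u}"
      by (intro relations_eq_lspan_prefix G(1)) auto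
    also have "\<dots> = Vec.lspan B {..<n - u}" using G(2) by (intro Vec.lspan_cong) auto
    finally show ?thesis .
  qed
  ultimately show ?thesis using f(1) by (intro exI[of _ f]) (auto intro: inj_onI)
qed

lemma card_rank_vectors_ge:
  assumes "u \<le> n"
  shows "card (Vec.indep_tuples Fvecs (n - u)) * card (Ext.indep_tuples UNIV u)
           \<le> card {e \<in> vecs n. rk F n e = u} * (\<Prod>i<n - u. card F ^ (n - u) - card F ^ i)"
proof -
  let ?T = "Vec.indep_tuples Fvecs (n - u)" and ?V = "Ext.indep_tuples UNIV u"
  let ?R = "{e \<in> vecs n. rk F n e = u}"
  let ?S = "SIGMA e:?R. Vec.indep_tuples (relations e) (n - u)"
  have "\<forall>B\<in>?T. \<exists>f. inj_on f ?V \<and> (\<forall>v\<in>?V. f v \<in> vecs n \<and> relations (f v) = Vec.lspan B {..<n - u})"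
    using exists_inj_vectors_with_relations[OF _ assms] by blast
  then obtain err where
    err: "\<forall>B\<in>?T. inj_on (err B) ?V \<and> (\<forall>v\<in>?V. err B v \<in> vecs n \<and> relations (err B v) = Vec.lspan B {..<n - u})"
    by (metis bchoice)
  have "inj_on (\<lambda>(B, v). (err B v, B)) (?T \<times> ?V)"
    using err by (auto intro!: inj_onI dest: inj_onD)
  moreover have "(err B v, B) \<in> ?S" if "B \<in> ?T" "v \<in> ?V" for B v
    using err that Vec.card_lspan_indep_tuple[OF that(1)] Vec.in_lspan
    by (auto simp: rk_eq_iff_card_relations[OF assms] Vec.indep_tuples_def)
  then have "(\<lambda>(B, v). (err B v, B)) ` (?T \<times> ?V) \<subseteq> ?S" by auto
  moreover have "finite ?S" by (auto intro!: finite_SigmaI Vec.finite_indep_tuples finite_relations)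
  ultimately have "card (?T \<times> ?V) \<le> card ?S" by (rule card_inj_on_le)
  also have "\<dots> = (\<Sum>e\<in>?R. card (Vec.indep_tuples (relations e) (n - u)))"
    by (auto intro!: card_SigmaI Vec.finite_indep_tuples finite_relations)
  also have "\<dots> = card ?R * (\<Prod>i<n - u. card F ^ (n - u) - card F ^ i)"
    using Vec.card_indep_tuples[OF subspace_relations finite_relations] card_relations by simp
  finally show ?thesis by (simp add: card_cartesian_product)
qed

lemma card_indep_tuples_relations:
  "card (Vec.indep_tuples (relations y) l) = (\<Prod>i<l. card F ^ (n - rk F n y) - card F ^ i)"
  by (simp add: Vec.card_indep_tuples[OF subspace_relations finite_relations] card_relations)

definition error_frames :: "(nat \<Rightarrow> 'a) set \<Rightarrow> nat \<Rightarrow> nat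
    \<Rightarrow> ((nat \<Rightarrow> 'a) \<times> (nat \<Rightarrow> 'a) \<times> (nat \<Rightarrow> nat \<Rightarrow> 'a) \<times> (nat \<Rightarrow> nat \<Rightarrow> 'a)) set" where
  "error_frames X t u = {(x, e, A, B). x \<in> X \<and> e \<in> vecs n
     \<and> A \<in> Vec.indep_tuples (relations (e - x)) (n - t) \<and> B \<in> Vec.indep_tuples (relations e) (n - u)}"

lemma finite_error_frames:
  assumes "X \<subseteq> vecs n"
  shows "finite (error_frames X t u)"
proof -
  have "error_frames X t u
      \<subseteq> X \<times> vecs n \<times> Vec.indep_tuples Fvecs (n - t) \<times> Vec.indep_tuples Fvecs (n - u)"
    using Vec.indep_tuples_mono[OF relations_subset] by (auto simp: error_frames_def)
  moreover have "finite (X \<times> (vecs n :: (nat \<Rightarrow> 'a) set)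
      \<times> Vec.indep_tuples Fvecs (n - t) \<times> Vec.indep_tuples Fvecs (n - u))"
    using finite_subset[OF assms]
    by (intro finite_cartesian_product) (simp_all add: Vec.finite_indep_tuples finite_Fvecs)
  ultimately show ?thesis by (rule finite_subset)
qed

lemma card_error_frames_le:
  assumes "t \<le> n" "u \<le> n" "k \<le> n" and X: "X \<subseteq> vecs n" "0 \<notin> X"
    and sep: "rank_separated (n - k) (insert 0 X)"
  shows "card (error_frames X t u) \<le> card (Vec.indep_tuples Fvecs (n - t))
           * card (Vec.indep_tuples Fvecs (n - u)) * CARD('a) ^ (k + t + u - n)"
proof -
  let ?T1 = "Vec.indep_tuples Fvecs (n - t)" and ?T2 = "Vec.indep_tuples Fvecs (n - u)"
  define P where "P A B = {(x, e). x \<in> X \<and> e \<in> vecs n \<and> Vec.lspan A {..<n - t} \<subseteq> relations (e - x)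
    \<and> Vec.lspan B {..<n - u} \<subseteq> relations e}" for A B
  have finP: "finite (P A B)" for A B
    using finite_cartesian_product[OF finite_subset[OF X(1) finite_vecs] finite_vecs]
    by (rule finite_subset[rotated]) (auto simp: P_def)
  have finT: "finite ?T1" "finite ?T2" by (simp_all add: Vec.finite_indep_tuples finite_Fvecs)
  have "((A, B), (x, e)) \<in> (SIGMA AB:?T1 \<times> ?T2. P (fst AB) (snd AB))"
    if "(x, e, A, B) \<in> error_frames X t u" for x e A B
    using that Vec.indep_tuples_mono[OF relations_subset]
      Vec.lspan_indep_tuple_subset[OF subspace_relations, of A "e - x"]
      Vec.lspan_indep_tuple_subset[OF subspace_relations, of B e]
    by (auto simp: error_frames_def P_def)
  then have "card (error_frames X t u) \<le> card (SIGMA AB:?T1 \<times> ?T2. P (fst AB) (snd AB))"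
    using finT finP
    by (intro card_inj_on_le[of "\<lambda>(x, e, A, B). ((A, B), (x, e))"]) (auto intro: inj_onI)
  also have "\<dots> = (\<Sum>AB\<in>?T1 \<times> ?T2. card (P (fst AB) (snd AB)))"
    using finT finP by (intro card_SigmaI) auto
  also have "\<dots> \<le> (\<Sum>AB\<in>?T1 \<times> ?T2. CARD('a) ^ (k + n - (n - t) - (n - u)))"
    unfolding P_def
    by (intro sum_mono card_compatible_pairs_le Vec.subspace_lspan assms
        Vec.lspan_indep_tuple_subset[OF subspace_Fvecs] Vec.card_lspan_indep_tuple) auto
  also have "\<dots> = card ?T1 * card ?T2 * CARD('a) ^ (k + t + u - n)"
    using assms(1,2) by (simp add: card_cartesian_product)
  finally show ?thesis .
qed

lemma card_errors_near_le:
  assumes "X \<subseteq> vecs n"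
  shows "card {e \<in> vecs n. rk F n e = u \<and> (\<exists>x\<in>X. rk F n (e - x) \<le> t)}
           * (\<Prod>i<n - t. card F ^ (n - t) - card F ^ i) * (\<Prod>i<n - u. card F ^ (n - u) - card F ^ i)
         \<le> card (error_frames X t u)"
proof -
  define E where "E = {e \<in> vecs n. rk F n e = u \<and> (\<exists>x\<in>X. rk F n (e - x) \<le> t)}"
  define xe where "xe e = (SOME x. x \<in> X \<and> rk F n (e - x) \<le> t)" for e
  have xe: "xe e \<in> X" "rk F n (e - xe e) \<le> t" if "e \<in> E" for e
    using someI_ex[of "\<lambda>x. x \<in> X \<and> rk F n (e - x) \<le> t"] that by (auto simp: E_def xe_def)
  define fr where "fr e = Vec.indep_tuples (relations (e - xe e)) (n - t)
    \<times> Vec.indep_tuples (relations e) (n - u)" for e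
  have "card E * (\<Prod>i<n - t. card F ^ (n - t) - card F ^ i) * (\<Prod>i<n - u. card F ^ (n - u) - card F ^ i)
      = (\<Sum>e\<in>E. (\<Prod>i<n - t. card F ^ (n - t) - card F ^ i) * (\<Prod>i<n - u. card F ^ (n - u) - card F ^ i))"
    by simp
  also have "\<dots> \<le> (\<Sum>e\<in>E. card (fr e))"
    unfolding fr_def card_cartesian_product
  proof (intro sum_mono mult_le_mono)
    fix e assume e: "e \<in> E"
    have "card F ^ (n - t) \<le> card F ^ (n - rk F n (e - xe e))"
      using xe(2)[OF e] Vec.power_card_F_le_iff by simp
    then show "(\<Prod>i<n - t. card F ^ (n - t) - card F ^ i)
        \<le> card (Vec.indep_tuples (relations (e - xe e)) (n - t))"
      unfolding card_indep_tuples_relations by (intro prod_mono) auto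
    show "(\<Prod>i<n - u. card F ^ (n - u) - card F ^ i) \<le> card (Vec.indep_tuples (relations e) (n - u))"
      using e by (simp add: E_def card_indep_tuples_relations)
  qed
  also have "\<dots> = card (Sigma E fr)"
    by (rule card_SigmaI[symmetric]) (auto simp: E_def fr_def intro: Vec.finite_indep_tuples finite_relations)
  also have "\<dots> \<le> card (error_frames X t u)"
  proof (rule card_inj_on_le[of "\<lambda>(e, A, B). (xe e, e, A, B)"])
    show "inj_on (\<lambda>(e, A, B). (xe e, e, A, B)) (Sigma E fr)" by (rule inj_onI) auto
    show "(\<lambda>(e, A, B). (xe e, e, A, B)) ` Sigma E fr \<subseteq> error_frames X t u"
      using xe(1) by (auto simp: error_frames_def fr_def E_def)
  qed (rule finite_error_frames[OF assms])
  finally show ?thesis unfolding E_def .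
qed

lemma card_errors_near_mult_le:
  assumes "t \<le> n" "u \<le> n" "k \<le> n" and X: "X \<subseteq> vecs n" "0 \<notin> X"
    and sep: "rank_separated (n - k) (insert 0 X)"
  shows "card {e \<in> vecs n. rk F n e = u \<and> (\<exists>x\<in>X. rk F n (e - x) \<le> t)}
           * (\<Prod>i<n - t. card F ^ (n - t) - card F ^ i) * (\<Prod>i<u. CARD('a) - card F ^ i)
         \<le> (\<Prod>i<n - t. card F ^ n - card F ^ i) * CARD('a) ^ (k + t + u - n)
           * card {e \<in> vecs n. rk F n e = u}"
proof -
  let ?E = "card {e \<in> vecs n. rk F n e = u \<and> (\<exists>x\<in>X. rk F n (e - x) \<le> t)}"
  let ?R = "card {e \<in> vecs n. rk F n e = u}"
  let ?GT = "\<Prod>i<n - t. card F ^ (n - t) - card F ^ i"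
  let ?GU = "\<Prod>i<n - u. card F ^ (n - u) - card F ^ i"
  let ?T1 = "\<Prod>i<n - t. card F ^ n - card F ^ i" and ?T2 = "\<Prod>i<n - u. card F ^ n - card F ^ i"
  let ?TV = "\<Prod>i<u. CARD('a) - card F ^ i" and ?Q = "CARD('a) ^ (k + t + u - n)"
  have card_Fvecs_tuples: "card (Vec.indep_tuples Fvecs l) = (\<Prod>i<l. card F ^ n - card F ^ i)" for l
    by (simp add: Vec.card_indep_tuples[OF subspace_Fvecs finite_Fvecs] card_Fvecs)
  have card_Ext_tuples: "card (Ext.indep_tuples UNIV u) = ?TV"
    by (simp add: Ext.card_indep_tuples Ext.is_subspace_def)
  have "(?E * ?GT * ?GU) * (?T2 * ?TV) \<le> (?T1 * ?T2 * ?Q) * (?R * ?GU)"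
    using order_trans[OF card_errors_near_le[OF X(1)] card_error_frames_le[OF assms]]
      card_rank_vectors_ge[OF assms(2)]
    unfolding card_Fvecs_tuples card_Ext_tuples by (rule mult_le_mono)
  then have "(?E * ?GT * ?TV) * (?GU * ?T2) \<le> (?T1 * ?Q * ?R) * (?GU * ?T2)"
    by (simp add: ac_simps)
  moreover have "0 < ?GU * ?T2" using Vec.prod_power_diff_pos[of "n - u"] by simp
  ultimately show ?thesis by simp
qed

end

section \<open>Partial products of \<open>K\<^sub>q\<close>\<close>

definition Kq_partial :: "nat \<Rightarrow> nat \<Rightarrow> real" where
  "Kq_partial q L = (\<Prod>j<L. 1 - 1 / real q ^ Suc j)"

lemma Kq_factor_bounds:
  assumes "2 \<le> q"
  shows "0 < 1 - 1 / real q ^ Suc j" "1 - 1 / real q ^ Suc j < 1"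
proof -
  have "1 < real q ^ Suc j" using assms by (intro one_less_power) auto
  then show "0 < 1 - 1 / real q ^ Suc j" "1 - 1 / real q ^ Suc j < 1" by simp_all
qed

lemma Kq_partial_pos: "2 \<le> q \<Longrightarrow> 0 < Kq_partial q L"
  unfolding Kq_partial_def using Kq_factor_bounds by (intro prod_pos) auto

lemma Kq_has_prod:
  assumes "2 \<le> q"
  shows "(\<lambda>j. 1 - 1 / real q ^ Suc j) has_prod Kq q"
proof -
  have "summable (\<lambda>j. (1 / real q) ^ Suc j)"
    using assms by (subst summable_Suc_iff) (simp add: summable_geometric)
  then have "summable (\<lambda>j. norm ((1 - 1 / real q ^ Suc j) - 1))" by (simp add: power_one_over)
  then have "convergent_prod (\<lambda>j. 1 - 1 / real q ^ Suc j)"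
    by (intro abs_convergent_prod_imp_convergent_prod summable_imp_abs_convergent_prod)
  then show ?thesis unfolding Kq_def by (rule convergent_prod_has_prod)
qed

lemma Kq_pos: "2 \<le> q \<Longrightarrow> 0 < Kq q"
  unfolding Kq_def using Kq_has_prod Kq_factor_bounds
  by (intro less_0_prodinf) (auto simp: has_prod_iff)

lemma Kq_less_Kq_partial:
  assumes "2 \<le> q"
  shows "Kq q < Kq_partial q L"
proof -
  have "Kq q \<le> Kq_partial q (Suc L)"
    unfolding Kq_partial_def using has_prod_unique[OF Kq_has_prod[OF assms]] Kq_has_prod[OF assms]
      Kq_factor_bounds[OF assms] by (metis less_imp_le prod_ge_prodinf)
  also have "\<dots> < Kq_partial q L"
    using Kq_partial_pos[OF assms, of L] Kq_factor_bounds[OF assms, of L]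
    by (simp add: Kq_partial_def)
  finally show ?thesis .
qed

text \<open>\<open>\<Prod>\<^bsub>i<u\<^esub> (q\<^sup>N - q\<^sup>i) = q\<^bsup>N u\<^esup> \<Prod>\<^bsub>i<u\<^esub> (1 - q\<^bsup>i - N\<^esup>)\<close>, and the factors of the last product
  are \<open>u\<close> of the factors of \<open>Kq_partial q N\<close>; the remaining ones are at most \<open>1\<close>.\<close>
lemma real_prod_power_diff_ge:
  assumes q: "2 \<le> q" and "u \<le> N"
  shows "real q ^ (N * u) * Kq_partial q N \<le> real (\<Prod>i<u. q ^ N - q ^ i)"
proof -
  have factor: "real (q ^ N - q ^ i) = real q ^ N * (1 - 1 / real q ^ (N - i))" if "i < u" for i
  proof -
    have "q ^ i \<le> q ^ N" "real q ^ N = real q ^ i * real q ^ (N - i)"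
      using that \<open>u \<le> N\<close> q by (simp_all add: power_increasing flip: power_add)
    then show ?thesis using q by (simp add: of_nat_diff field_simps)
  qed
  have bounds: "0 \<le> 1 - 1 / real q ^ j" "1 - 1 / real q ^ j \<le> 1" for j
    using q by (auto simp: field_simps one_le_power)
  have "Kq_partial q N = (\<Prod>i<N. 1 - 1 / real q ^ (N - i))"
    unfolding Kq_partial_def
    by (rule prod.reindex_bij_witness[where i = "\<lambda>j. N - Suc j" and j = "\<lambda>i. N - Suc i"]) auto
  also have "\<dots> = (\<Prod>i<u. 1 - 1 / real q ^ (N - i)) * (\<Prod>i\<in>{u..<N}. 1 - 1 / real q ^ (N - i))"
    using \<open>u \<le> N\<close> by (subst prod.union_disjoint[symmetric]) (auto intro: prod.cong)
  also have "\<dots> \<le> (\<Prod>i<u. 1 - 1 / real q ^ (N - i))"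
    using bounds by (intro mult_left_le prod_le_1 prod_nonneg) auto
  finally have "real q ^ (N * u) * Kq_partial q N \<le> real q ^ (N * u) * (\<Prod>i<u. 1 - 1 / real q ^ (N - i))"
    by (simp add: mult_left_mono)
  also have "\<dots> = real (\<Prod>i<u. q ^ N - q ^ i)"
    by (simp add: factor prod.distrib power_mult)
  finally show ?thesis .
qed

lemma exponent_inequality:
  fixes n m k t u :: nat
  assumes "2 * t \<le> n - k" "k \<le> n" "n \<le> m" "n \<le> k + t + u"
  shows "n * (n - t) + m * (k + t + u - n) + t * t \<le> (n - t) * (n - t) + m * u"
proof -
  have "n * t \<le> m * (n - k - t)" using assms by (intro mult_le_mono) auto
  then have "int n * int t \<le> int (m * (n - k - t))" by (simp flip: of_nat_mult)
  also have "\<dots> = int m * (int n - int k - int t)" using assms by (simp add: of_nat_diff)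
  finally have "int n * int t \<le> int m * (int n - int k - int t)" .
  then have "int n * (int n - int t) + int m * (int k + int t + int u - int n) + int t * int t
      \<le> (int n - int t) * (int n - int t) + int m * int u"
    by (simp add: algebra_simps)
  moreover have "int (n * (n - t) + m * (k + t + u - n) + t * t)
      = int n * (int n - int t) + int m * (int k + int t + int u - int n) + int t * int t"
    "int ((n - t) * (n - t) + m * u) = (int n - int t) * (int n - int t) + int m * int u"
    using assms by (simp_all add: of_nat_diff)
  ultimately show ?thesis by linarith
qed

lemma error_ratio_less:
  fixes q m n k t u :: nat
  assumes q: "2 \<le> q" and "n \<le> m" "2 * t \<le> n - k" "k \<le> n" "n \<le> k + t + u" "u \<le> n"
  shows "real (\<Prod>i<n - t. q ^ n - q ^ i) * real q ^ (m * (k + t + u - n))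
           / (real (\<Prod>i<n - t. q ^ (n - t) - q ^ i) * real (\<Prod>i<u. q ^ m - q ^ i))
         < 1 / real q ^ t\<^sup>2 / (Kq q)\<^sup>2"
proof -
  define a where "a = real q"
  define L where "L = n - t"
  define KL where "KL = Kq_partial q L"
  define Km where "Km = Kq_partial q m"
  have a: "1 \<le> a" using q by (simp add: a_def)
  have K: "0 < Kq q" "Kq q < KL" "Kq q < Km"
    unfolding KL_def Km_def using Kq_pos Kq_less_Kq_partial q by auto
  have "real (\<Prod>i<L. q ^ n - q ^ i) \<le> a ^ (n * L)"
  proof -
    have "(\<Prod>i<L. q ^ n - q ^ i) \<le> (\<Prod>i<L. q ^ n)" by (rule prod_mono) simp
    then have "real (\<Prod>i<L. q ^ n - q ^ i) \<le> real ((q ^ n) ^ L)" by (simp only: of_nat_le_iff) simp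
    then show ?thesis by (simp add: a_def power_mult)
  qed
  then have "real (\<Prod>i<L. q ^ n - q ^ i) * a ^ (m * (k + t + u - n))
      / (real (\<Prod>i<L. q ^ L - q ^ i) * real (\<Prod>i<u. q ^ m - q ^ i))
      \<le> a ^ (n * L) * a ^ (m * (k + t + u - n)) / ((a ^ (L * L) * KL) * (a ^ (m * u) * Km))"
    using real_prod_power_diff_ge[OF q, of L L] real_prod_power_diff_ge[OF q, of u m] assms(2,6) a K
    unfolding KL_def Km_def a_def
    by (intro frac_le mult_mono mult_right_mono) (auto simp: L_def simp del: of_nat_prod)
  also have "\<dots> = (a ^ (n * L) * a ^ (m * (k + t + u - n)) / (a ^ (L * L) * a ^ (m * u))) / (KL * Km)"
    by (simp add: ac_simps)
  also have "\<dots> \<le> (1 / a ^ (t * t)) / (KL * Km)"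
  proof (intro divide_right_mono)
    have "a ^ (n * L) * a ^ (m * (k + t + u - n)) * a ^ (t * t) \<le> a ^ (L * L) * a ^ (m * u)"
      using exponent_inequality[OF assms(3,4,2,5)] a
      by (simp add: L_def power_increasing flip: power_add)
    then show "a ^ (n * L) * a ^ (m * (k + t + u - n)) / (a ^ (L * L) * a ^ (m * u)) \<le> 1 / a ^ (t * t)"
      using a by (simp add: divide_simps mult.commute)
  qed (use K in simp)
  also have "\<dots> < (1 / a ^ (t * t)) / (Kq q)\<^sup>2"
    using K a
    by (intro divide_strict_left_mono) (auto simp: power2_eq_square intro: mult_strict_mono)
  finally show ?thesis by (simp add: a_def L_def power2_eq_square)
qed

section \<open>The decoder error probability\<close>

lemma decoder_error_iff:
  "decoder_error F n C t c e \<longleftrightarrow> (\<exists>x\<in>{c' - c | c'. c' \<in> C \<and> c' \<noteq> c}. rk F n (e - x) \<le> t)"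
proof -
  have "(\<lambda>i. c i + e i - c' i) = e - (c' - c)" for c' :: "nat \<Rightarrow> 'a" by (simp add: fun_eq_iff)
  then show ?thesis unfolding decoder_error_def by auto
qed

context rank_setting
begin

lemma rank_separated_translated_code:
  assumes "min_rank_dist F n C = Suc r"
  shows "rank_separated r ((\<lambda>c'. c' - c) ` C)"
proof -
  let ?D = "{rk F n (\<lambda>i. a i - b i) | a b. a \<in> C \<and> b \<in> C \<and> a \<noteq> b}"
  have "finite ?D" by (rule finite_subset[of _ "{..n}"]) (auto intro: rk_le)
  have "r < rk F n (x - y)"
    if xy: "x \<in> (\<lambda>c'. c' - c) ` C" "y \<in> (\<lambda>c'. c' - c) ` C" "x \<noteq> y" for x y
  proof -
    obtain c1 c2 where c12: "c1 \<in> C" "c2 \<in> C" "x = c1 - c" "y = c2 - c" using xy(1,2) by blast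
    then have "x - y = (\<lambda>i. c1 i - c2 i)" "c1 \<noteq> c2" using xy(3) by (auto simp: fun_eq_iff)
    then have "rk F n (x - y) \<in> ?D" using c12 by auto
    then have "Min ?D \<le> rk F n (x - y)" using \<open>finite ?D\<close> by simp
    then show ?thesis using assms unfolding min_rank_dist_def by simp
  qed
  then show ?thesis unfolding rank_separated_def by blast
qed

lemma PE_le:
  assumes C: "C \<subseteq> vecs n" "c \<in> C" "min_rank_dist F n C = Suc (n - k)"
    and "CARD('a) = card F ^ m" and "k \<le> n" "t \<le> n" "u \<le> n" "u \<le> m"
  shows "PE F n C c t u \<le> real ((\<Prod>i<n - t. card F ^ n - card F ^ i) * card F ^ (m * (k + t + u - n)))
      / real ((\<Prod>i<n - t. card F ^ (n - t) - card F ^ i) * (\<Prod>i<u. card F ^ m - card F ^ i))"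
proof -
  define X where "X = {c' - c | c'. c' \<in> C \<and> c' \<noteq> c}"
  have X: "X \<subseteq> vecs n" "0 \<notin> X" using C(1,2) by (auto simp: X_def intro: vecs_diff)
  have "insert 0 X = (\<lambda>c'. c' - c) ` C" using C(2) by (auto simp: X_def)
  then have sep: "rank_separated (n - k) (insert 0 X)" using rank_separated_translated_code C(3)
    by simp
  have "PE F n C c t u = real (card {e \<in> vecs n. rk F n e = u \<and> (\<exists>x\<in>X. rk F n (e - x) \<le> t)})
      / real (card {e \<in> vecs n. rk F n e = u})"
    by (simp add: PE_def decoder_error_iff X_def)
  also have "\<dots> \<le> real ((\<Prod>i<n - t. card F ^ n - card F ^ i) * card F ^ (m * (k + t + u - n)))
      / real ((\<Prod>i<n - t. card F ^ (n - t) - card F ^ i) * (\<Prod>i<u. card F ^ m - card F ^ i))"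
  proof (rule divide_le_divide_of_nat)
    show "card {e \<in> vecs n. rk F n e = u \<and> (\<exists>x\<in>X. rk F n (e - x) \<le> t)}
        * ((\<Prod>i<n - t. card F ^ (n - t) - card F ^ i) * (\<Prod>i<u. card F ^ m - card F ^ i))
      \<le> (\<Prod>i<n - t. card F ^ n - card F ^ i) * card F ^ (m * (k + t + u - n))
        * card {e \<in> vecs n. rk F n e = u}"
      using card_errors_near_mult_le[OF assms(6,7,5) X sep]
        unfolding assms(4) power_mult mult.assoc .
    show "0 < (\<Prod>i<n - t. card F ^ (n - t) - card F ^ i) * (\<Prod>i<u. card F ^ m - card F ^ i)"
      using Vec.prod_power_diff_pos[of "n - t"] Vec.prod_power_diff_pos[of u m] assms(8) by simp
  qed
  finally show ?thesis .
qed

end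

theorem proposition6:
  fixes F :: "'a::{field,finite} set"
    and C :: "(nat \<Rightarrow> 'a) set"
    and q m n k :: nat
  assumes "primepow q"
    and "CARD('a) = q ^ m"
    and "is_subfield F" and "card F = q"
    and "n \<le> m" and "1 \<le> k" and "k \<le> n"
    and "C \<subseteq> vecs n" and "card C = q ^ (m * k)"
    and "min_rank_dist F n C = n - k + 1"
    and "c \<in> C"
    and "(n - k + 1) - (n - k) div 2 \<le> u" and "u \<le> n"
  shows "PE F n C c ((n - k) div 2) u
           < (1 / real q ^ (((n - k) div 2)\<^sup>2)) / (Kq q)\<^sup>2"
proof -
  interpret rank_setting F n by unfold_locales (rule assms(3))
  define t where "t = (n - k) div 2"
  have q: "2 \<le> q" using Ext.card_F_ge_2 assms(4) by simp
  have t: "t \<le> n" "2 * t \<le> n - k" "n \<le> k + t + u" using assms(7,12) by (auto simp: t_def)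
  have "PE F n C c t u \<le> real ((\<Prod>i<n - t. q ^ n - q ^ i) * q ^ (m * (k + t + u - n)))
      / real ((\<Prod>i<n - t. q ^ (n - t) - q ^ i) * (\<Prod>i<u. q ^ m - q ^ i))"
    using PE_le[OF assms(8,11) _ _ assms(7) t(1) assms(13)] assms(2,4,5,10,13) by simp
  also have "\<dots> < 1 / real q ^ t\<^sup>2 / (Kq q)\<^sup>2"
    using error_ratio_less[OF q assms(5) t(2) assms(7) t(3) assms(13)] by (simp add: power_mult)
  finally show ?thesis unfolding t_def .
qed

end
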